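(* Let $p\ge1$, $k\ge1$, and suppose $c\in\mathbb R^p$ and $f_i(z)=\Phi_iz$ with $\Phi_i\in\mathbb R^{p\times p}$ for $i=0,\dots,k$ (a linear VAR), with $\Phi(\lambda)\defeq\Phi_0-\sum_{i=1}^k\Phi_i\lambda^i$. Suppose for some $r\in\{0,\dots,p\}$, with $q=p-r$: (LIN.1) $\Phi_0$ is invertible; (LIN.2) $c\in\operatorname{span}\Phi(1)$ and $\operatorname{rank}\Phi(1)=r$; (LIN.3) $\Phi(\lambda)$ has $q$ roots at unity and all others outside the unit circle. Then $(c,\{f_i\}_{i=0}^k)$ belongs to the class $\mathcal M_r$, with $g_j(z)=\Gamma_jz$ where $\Gamma_j\defeq-\sum_{i=j+1}^k\Phi_i$ for $j=1,\dots,k-1$, and $$\chi(z)=\begin{bmatrix}\psi(z)\\\theta(z)\end{bmatrix}=\begin{bmatrix}\alpha_\perp^\top(\Phi_0-\sum_{i=1}^{k-1}\Gamma_i)\\\beta^\top\end{bmatrix}z,$$ for $\alpha,\beta\in\mathbb R^{p\times r}$ (of full column rank) such that $\alpha\beta^\top=-\Phi(1)$.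
   Context: Roots of $\Phi(\lambda)$ means roots of $\det\Phi(\lambda)$. Model: for $c\in\mathbb R^p$ and maps $f_0,\dots,f_k:\mathbb R^p\to\mathbb R^p$ with $f_i(0)=0$, the nonlinear VAR($k$) is $f_0(z_t)=c+\sum_{i=1}^k f_i(z_{t-i})+u_t$. (When $k=1$, blocks indexed by $1,\dots,k-1$ are empty.) Define $g_j(z)=-\sum_{i=j+1}^k f_i(z)$; $\pi(z)=-f_0(z)+\sum_{i=1}^k f_i(z)$; $\mathbf g(z)=(g_1(z)^\top,\dots,g_{k-1}(z)^\top)^\top$. $D\in\mathbb R^{p(k-1)\times p(k-1)}$ has $-I_p$ diagonal blocks, $I_p$ blocks immediately above the diagonal, zeros elsewhere; $E=(I_p,0_{p\times p(k-2)})^\top$. For $\alpha$ of rank $r$, $\alpha_\perp$ is $p\times(p-r)$ of rank $p-r$ with $\alpha_\perp^\top\alpha=0$; $\boldsymbol\alpha=\begin{bmatrix}\alpha & E^\top\\ 0 & I_{p(k-1)}\end{bmatrix}$; for $\theta:\mathbb R^p\to\mathbb R^r$, $\boldsymbol\theta(z)=(\theta(z)^\top,\mathbf g(z)^\top)^\top$, $\mathbf D_0=\begin{bmatrix}0_{r\times p}&0\\0&D\end{bmatrix}$. Joint spectral radius: $\rho_{JSR}(\mathcal A)=\limsup_{t}\sup\{\rho(M_1\cdots M_t)^{1/t}:M_s\in\mathcal A\}$. Class $\mathcal M_r$: the model belongs to $\mathcal M_r$ if for some $\alpha\in\mathbb R^{p\times r}$ of rank $r$, $\bar b<\infty$, $\bar\rho<1$: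 (i) $f_0$ is a homeomorphism of $\mathbb R^p$; (ii) there exist $\mu\in\mathbb R^r$, $\theta:\mathbb R^p\to\mathbb R^r$ with $c=\alpha\mu$, $\pi=\alpha\theta$; (iii) there is a closed $\mathcal B\subset\mathbb R^{kp\times[p(k-1)+r]}$ with $\max_{\mathcal B}\|\boldsymbol\beta\|\le\bar b$ and $\rho_{JSR}(\{I+\boldsymbol\beta^\top\boldsymbol\alpha:\boldsymbol\beta\in\mathcal B\})\le\bar\rho$, such that for all $\mathbf z=(z^\top,\boldsymbol\zeta^\top)^\top,\mathbf z'\in\mathbb R^{kp}$ some $\boldsymbol\beta\in\mathcal B$ satisfies $[\boldsymbol\theta(f_0^{-1}(z))+\mathbf D_0\mathbf z]-[\boldsymbol\theta(f_0^{-1}(z'))+\mathbf D_0\mathbf z']=\boldsymbol\beta^\top(\mathbf z-\mathbf z')$. Then $\psi(z)=\alpha_\perp^\top[f_0(z)-\sum_{i=1}^{k-1}g_i(z)]$ and $\chi=(\psi^\top,\theta^\top)^\top$. *)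

theory Defs
  imports "Jordan_Normal_Form.Spectral_Radius" "Jordan_Normal_Form.DL_Rank"
    "HOL-Library.Liminf_Limsup" "HOL-Library.Extended_Real"
begin

definition vnorm :: "real vec \<Rightarrow> real" where
  "vnorm v = sqrt (\<Sum>i<dim_vec v. (v $ i)^2)"

definition mnorm :: "real mat \<Rightarrow> real" where
  "mnorm A = sqrt (\<Sum>i<dim_row A. \<Sum>j<dim_col A. (A $$ (i,j))^2)"

definition cont_on_vec :: "nat \<Rightarrow> (real vec \<Rightarrow> real vec) \<Rightarrow> bool" where
  "cont_on_vec n f \<longleftrightarrow> (\<forall>x\<in>carrier_vec n. \<forall>e>0. \<exists>d>0. \<forall>y\<in>carrier_vec n.
      vnorm (y - x) < d \<longrightarrow> vnorm (f y - f x) < e)"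

definition homeo_vec :: "nat \<Rightarrow> (real vec \<Rightarrow> real vec) \<Rightarrow> bool" where
  "homeo_vec n f \<longleftrightarrow> bij_betw f (carrier_vec n) (carrier_vec n) \<and> cont_on_vec n f
     \<and> cont_on_vec n (the_inv_into (carrier_vec n) f)"

definition closed_mats :: "nat \<Rightarrow> nat \<Rightarrow> real mat set \<Rightarrow> bool" where
  "closed_mats m n B \<longleftrightarrow> B \<subseteq> carrier_mat m n \<and>
     (\<forall>X L. L \<in> carrier_mat m n \<longrightarrow> (\<forall>t. X t \<in> B) \<longrightarrow>
        (\<lambda>t. mnorm (X t - L)) \<longlonglongrightarrow> 0 \<longrightarrow> L \<in> B)"

text \<open>spectral radius of a real square matrix (over its complex eigenvalues);
  the 0x0 matrix gets spectral radius 0\<close>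
definition srad :: "real mat \<Rightarrow> real" where
  "srad M = (if dim_row M = 0 then 0 else spectral_radius (map_mat complex_of_real M))"

definition jsr :: "nat \<Rightarrow> real mat set \<Rightarrow> ereal" where
  "jsr n A = limsup (\<lambda>t. SUP Ms \<in> {Ms. length Ms = t \<and> set Ms \<subseteq> A}.
       ereal (root t (srad (foldr (*) Ms (1\<^sub>m n)))))"

definition gfun :: "nat \<Rightarrow> nat \<Rightarrow> (nat \<Rightarrow> real vec \<Rightarrow> real vec) \<Rightarrow> nat \<Rightarrow> real vec \<Rightarrow> real vec" where
  "gfun p k f j z = vec p (\<lambda>l. - (\<Sum>i\<in>{j+1..k}. f i z $ l))"

definition pifun :: "nat \<Rightarrow> nat \<Rightarrow> (nat \<Rightarrow> real vec \<Rightarrow> real vec) \<Rightarrow> real vec \<Rightarrow> real vec" where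
  "pifun p k f z = vec p (\<lambda>l. - f 0 z $ l + (\<Sum>i\<in>{1..k}. f i z $ l))"

text \<open>stacked vector (g_1(z), ..., g_{k-1}(z))\<close>
definition gbold :: "nat \<Rightarrow> nat \<Rightarrow> (nat \<Rightarrow> real vec \<Rightarrow> real vec) \<Rightarrow> real vec \<Rightarrow> real vec" where
  "gbold p k f z = vec (p*(k-1)) (\<lambda>l. gfun p k f (l div p + 1) z $ (l mod p))"

definition Dmat :: "nat \<Rightarrow> nat \<Rightarrow> real mat" where
  "Dmat p k = mat (p*(k-1)) (p*(k-1)) (\<lambda>(i,j). if i = j then -1 else if j = i + p then 1 else 0)"

definition Emat :: "nat \<Rightarrow> nat \<Rightarrow> real mat" where
  "Emat p k = mat (p*(k-1)) p (\<lambda>(i,j). if i = j then 1 else 0)"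

definition alpha_bold :: "nat \<Rightarrow> nat \<Rightarrow> nat \<Rightarrow> real mat \<Rightarrow> real mat" where
  "alpha_bold p k r \<alpha> = four_block_mat \<alpha> (transpose_mat (Emat p k)) (0\<^sub>m (p*(k-1)) r) (1\<^sub>m (p*(k-1)))"

definition theta_bold :: "nat \<Rightarrow> nat \<Rightarrow> (nat \<Rightarrow> real vec \<Rightarrow> real vec) \<Rightarrow> (real vec \<Rightarrow> real vec)
    \<Rightarrow> real vec \<Rightarrow> real vec" where
  "theta_bold p k f \<theta> z = \<theta> z @\<^sub>v gbold p k f z"

definition D0mat :: "nat \<Rightarrow> nat \<Rightarrow> nat \<Rightarrow> real mat" where
  "D0mat p k r = four_block_mat (0\<^sub>m r p) (0\<^sub>m r (p*(k-1))) (0\<^sub>m (p*(k-1)) p) (Dmat p k)"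

definition psi :: "nat \<Rightarrow> nat \<Rightarrow> (nat \<Rightarrow> real vec \<Rightarrow> real vec) \<Rightarrow> real mat \<Rightarrow> real vec \<Rightarrow> real vec" where
  "psi p k f \<alpha>perp z = transpose_mat \<alpha>perp *\<^sub>v
     vec p (\<lambda>l. f 0 z $ l - (\<Sum>i\<in>{1..k-1}. gfun p k f i z $ l))"

definition Mr_wit :: "nat \<Rightarrow> nat \<Rightarrow> nat \<Rightarrow> real vec \<Rightarrow> (nat \<Rightarrow> real vec \<Rightarrow> real vec)
    \<Rightarrow> real mat \<Rightarrow> (real vec \<Rightarrow> real vec) \<Rightarrow> bool" where
  "Mr_wit p k r c f \<alpha> \<theta> \<longleftrightarrow>
     \<alpha> \<in> carrier_mat p r \<and> vec_space.rank p \<alpha> = r \<and>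
     (\<exists>bbar \<rho>bar. \<rho>bar < 1 \<and>
        homeo_vec p (f 0) \<and>
        (\<exists>\<mu>\<in>carrier_vec r. c = \<alpha> *\<^sub>v \<mu>) \<and>
        (\<forall>z\<in>carrier_vec p. \<theta> z \<in> carrier_vec r \<and> pifun p k f z = \<alpha> *\<^sub>v \<theta> z) \<and>
        (\<exists>B. closed_mats (k*p) (p*(k-1)+r) B \<and> (\<forall>\<beta>\<in>B. mnorm \<beta> \<le> bbar) \<and>
           jsr (p*(k-1)+r) ((\<lambda>\<beta>. 1\<^sub>m (p*(k-1)+r) + transpose_mat \<beta> * alpha_bold p k r \<alpha>) ` B)
             \<le> ereal \<rho>bar \<and>
           (\<forall>zb\<in>carrier_vec (k*p). \<forall>zb'\<in>carrier_vec (k*p). \<exists>\<beta>\<in>B.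
              (theta_bold p k f \<theta> (the_inv_into (carrier_vec p) (f 0) (vec_first zb p))
                 + D0mat p k r *\<^sub>v zb)
              - (theta_bold p k f \<theta> (the_inv_into (carrier_vec p) (f 0) (vec_first zb' p))
                 + D0mat p k r *\<^sub>v zb')
              = transpose_mat \<beta> *\<^sub>v (zb - zb'))))"

definition in_Mr :: "nat \<Rightarrow> nat \<Rightarrow> nat \<Rightarrow> real vec \<Rightarrow> (nat \<Rightarrow> real vec \<Rightarrow> real vec) \<Rightarrow> bool" where
  "in_Mr p k r c f \<longleftrightarrow> (\<exists>\<alpha> \<theta>. Mr_wit p k r c f \<alpha> \<theta>)"

definition PhiAt :: "nat \<Rightarrow> nat \<Rightarrow> (nat \<Rightarrow> real mat) \<Rightarrow> real \<Rightarrow> real mat" where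
  "PhiAt p k \<Phi> x = mat p p (\<lambda>(a,b). \<Phi> 0 $$ (a,b) - (\<Sum>i\<in>{1..k}. \<Phi> i $$ (a,b) * x ^ i))"

definition PhiPoly :: "nat \<Rightarrow> nat \<Rightarrow> (nat \<Rightarrow> real mat) \<Rightarrow> real poly mat" where
  "PhiPoly p k \<Phi> = mat p p (\<lambda>(a,b). [:\<Phi> 0 $$ (a,b):] - (\<Sum>i\<in>{1..k}. monom (\<Phi> i $$ (a,b)) i))"

definition detPhi :: "nat \<Rightarrow> nat \<Rightarrow> (nat \<Rightarrow> real mat) \<Rightarrow> complex poly" where
  "detPhi p k \<Phi> = map_poly complex_of_real (det (PhiPoly p k \<Phi>))"

definition Gamma :: "nat \<Rightarrow> nat \<Rightarrow> (nat \<Rightarrow> real mat) \<Rightarrow> nat \<Rightarrow> real mat" where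
  "Gamma p k \<Phi> j = mat p p (\<lambda>(a,b). - (\<Sum>i\<in>{j+1..k}. \<Phi> i $$ (a,b)))"

end

theory Submission
  imports Defs "HOL-Analysis.L2_Norm"
begin

text \<open>For the linear model every map in condition (iii) is linear, so one matrix \<open>\<beta>\<close> serves for all
  pairs of states and the joint spectral radius reduces to the spectral radius of the companion
  matrix \<open>M = I + \<beta>\<^sup>T \<alpha>\<close>. Write \<open>\<Phi>(z) = (1 - z) \<Psi>(z) + z \<Phi>(1)\<close> with
  \<open>\<Psi>(z) = \<Phi>\<^sub>0 - \<Sum>\<^sub>j \<Gamma>\<^sub>j z\<^sup>j\<close>. An eigenvector of \<open>M\<close> for \<open>\<mu> \<noteq> 0\<close> produces \<open>(x, a) \<noteq> 0\<close> with
  \<open>\<Psi>(1/\<mu>) x = \<alpha> a\<close> and \<open>\<beta>\<^sup>T x = (\<mu> - 1) a\<close>, hence \<open>\<Phi>(1/\<mu>) x = 0\<close>; for \<open>\<mu> \<noteq> 1\<close> the root condition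
  gives \<open>|\<mu>| < 1\<close>. The eigenvalue \<open>1\<close> is excluded by the multiplicity condition:
  \<open>det \<Phi>(z) = (1 - z)\<^sup>p\<^sup>-\<^sup>r det G(z)\<close> where \<open>G(1)\<close> is the bordered matrix
  \<open>[\<Psi>(1), \<alpha>; \<beta>\<^sup>T, 0]\<close>, so the root \<open>1\<close> having multiplicity exactly \<open>p - r\<close> forces \<open>det G(1) \<noteq> 0\<close>,
  while an eigenvector for \<open>\<mu> = 1\<close> would lie in the kernel of \<open>G(1)\<close>.\<close>

lemma one_minus_mult_sum_powers:
  fixes z :: "'a::comm_ring_1"
  shows "(1 - z) * (\<Sum>j\<in>{1..k}. z^j) = z - z^Suc k"
proof (induction k)
  case (Suc k)
  have "(1 - z) * (\<Sum>j\<in>{1..Suc k}. z^j) = (1 - z) * (\<Sum>j\<in>{1..k}. z^j) + (1 - z) * z^Suc k"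
    by (simp add: distrib_left)
  also have "\<dots> = z - z^Suc k + (1 - z) * z^Suc k"
    by (simp only: Suc.IH)
  also have "\<dots> = z - z^Suc (Suc k)"
    by (simp add: algebra_simps)
  finally show ?case .
qed simp

lemma tail_sum_powers_Suc:
  fixes z :: "'a::comm_ring_1"
  shows "(\<Sum>j\<in>{1..Suc k - 1}. (\<Sum>i\<in>{j+1..Suc k}. \<phi> i) * z^j)
     = (\<Sum>j\<in>{1..k-1}. (\<Sum>i\<in>{j+1..k}. \<phi> i) * z^j) + \<phi> (Suc k) * (\<Sum>j\<in>{1..k}. z^j)"
proof -
  have "(\<Sum>j\<in>{1..k}. (\<Sum>i\<in>{j+1..Suc k}. \<phi> i) * z^j)
      = (\<Sum>j\<in>{1..k}. (\<Sum>i\<in>{j+1..k}. \<phi> i) * z^j) + \<phi> (Suc k) * (\<Sum>j\<in>{1..k}. z^j)"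
    by (simp add: sum.distrib sum_distrib_left algebra_simps)
  also have "(\<Sum>j\<in>{1..k}. (\<Sum>i\<in>{j+1..k}. \<phi> i) * z^j) = (\<Sum>j\<in>{1..k-1}. (\<Sum>i\<in>{j+1..k}. \<phi> i) * z^j)"
    by (cases k) simp_all
  finally show ?thesis by simp
qed

lemma sum_powers_split_at_one:
  fixes z :: "'a::comm_ring_1"
  shows "c - (\<Sum>i\<in>{1..k}. \<phi> i * z^i) =
    (1 - z) * (c + (\<Sum>j\<in>{1..k-1}. (\<Sum>i\<in>{j+1..k}. \<phi> i) * z^j)) + z * (c - (\<Sum>i\<in>{1..k}. \<phi> i))"
proof (induction k)
  case (Suc k)
  have "(1 - z) * (\<phi> (Suc k) * (\<Sum>j\<in>{1..k}. z^j)) = \<phi> (Suc k) * (z - z^Suc k)"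
    by (metis mult.left_commute one_minus_mult_sum_powers)
  with Suc show ?case
    unfolding tail_sum_powers_Suc by (simp add: algebra_simps)
qed (simp add: algebra_simps)


section \<open>Spectral radius of matrix powers\<close>

lemma upper_triangular_mult_diag:
  assumes A: "A \<in> carrier_mat n n" and B: "B \<in> carrier_mat n n"
    and uA: "upper_triangular A" and uB: "upper_triangular B"
  shows "upper_triangular (A * B) \<and> (\<forall>i<n. (A * B) $$ (i,i) = A $$ (i,i) * B $$ (i,i))"
proof -
  have vanish: "A $$ (i,l) * B $$ (l,j) = 0" if "i < n" "l < n" "j \<le> i" "l \<noteq> i \<or> j \<noteq> i" for i j l
    using that upper_triangularD[OF uA, of l i] upper_triangularD[OF uB, of j l] A B
    by (cases "l < i") auto
  have entry: "(A * B) $$ (i,j) = (\<Sum>l<n. A $$ (i,l) * B $$ (l,j))" if "i < n" "j < n" for i j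
    using A B that by (simp add: scalar_prod_def lessThan_atLeast0)
  show ?thesis
  proof (intro conjI allI impI upper_triangularI)
    fix i j assume "j < i" "i < dim_row (A * B)"
    then show "(A * B) $$ (i,j) = 0" using A entry vanish by (auto intro!: sum.neutral)
  next
    fix i assume i: "i < n"
    have "(\<Sum>l<n. A $$ (i,l) * B $$ (l,i)) = A $$ (i,i) * B $$ (i,i)"
      using i vanish by (subst sum.remove[of _ i]) (auto intro!: sum.neutral)
    then show "(A * B) $$ (i,i) = A $$ (i,i) * B $$ (i,i)" using entry i by simp
  qed
qed

lemma upper_triangular_pow:
  fixes A :: "'a::comm_ring_1 mat"
  assumes A: "A \<in> carrier_mat n n" and uA: "upper_triangular A"
  shows "upper_triangular (A ^\<^sub>m t) \<and> (\<forall>i<n. (A ^\<^sub>m t) $$ (i,i) = A $$ (i,i) ^ t)"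
proof (induction t)
  case (Suc t)
  then show ?case
    using upper_triangular_mult_diag[OF pow_carrier_mat[OF A] A _ uA, of t] by (auto simp: mult.commute)
qed (use A in auto)

text \<open>Via a Schur decomposition the eigenvalues of \<open>C ^\<^sub>m t\<close> are read off the diagonal of \<open>B ^\<^sub>m t\<close>
  for an upper triangular \<open>B\<close> similar to \<open>C\<close>.\<close>

lemma eigenvalue_pow_mat_obtain:
  fixes C :: "complex mat"
  assumes C: "C \<in> carrier_mat n n" and ev: "eigenvalue (C ^\<^sub>m t) \<nu>"
  obtains \<mu> where "eigenvalue C \<mu>" "\<nu> = \<mu> ^ t"
proof -
  from char_poly_factorized[OF C] obtain es where es: "char_poly C = (\<Prod>a\<leftarrow>es. [:- a, 1:])" by auto
  from schur_decomposition_exists[OF C es] obtain B where B: "B \<in> carrier_mat n n"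
    "upper_triangular B" "similar_mat C B" by auto
  from B(3) obtain P Q where wit: "similar_mat_wit C B P Q" unfolding similar_mat_def by auto
  have sim_pow: "similar_mat (C ^\<^sub>m t) (B ^\<^sub>m t)"
    using similar_mat_wit_pow[OF wit] unfolding similar_mat_def by auto
  have Bt: "B ^\<^sub>m t \<in> carrier_mat n n" using B by simp
  note ut = upper_triangular_pow[OF B(1,2), of t]
  have "poly (char_poly (B ^\<^sub>m t)) \<nu> = 0"
    using ev eigenvalue_root_char_poly[OF pow_carrier_mat[OF C]] char_poly_similar[OF sim_pow] by simp
  then obtain i where i: "i < n" "\<nu> = (B ^\<^sub>m t) $$ (i,i)"
    unfolding char_poly_upper_triangular[OF Bt conjunct1[OF ut]] poly_prod_list_zero_iff
    using Bt by (auto simp: diag_mat_def)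
  have "poly (char_poly B) (B $$ (i,i)) = 0"
    unfolding char_poly_upper_triangular[OF B(1,2)] poly_prod_list_zero_iff
    using i B(1) by (auto simp: diag_mat_def)
  then have "eigenvalue C (B $$ (i,i))"
    using char_poly_similar[OF B(3)] eigenvalue_root_char_poly[OF C] by simp
  with i ut that show ?thesis by simp
qed

lemma spectral_radius_pow_mat_le:
  fixes C :: "complex mat"
  assumes C: "C \<in> carrier_mat n n" and n: "n > 0"
  shows "spectral_radius (C ^\<^sub>m t) \<le> spectral_radius C ^ t"
proof -
  from spectral_radius_mem_max(1)[OF pow_carrier_mat[OF C] n] obtain \<nu> where
    nu: "eigenvalue (C ^\<^sub>m t) \<nu>" "spectral_radius (C ^\<^sub>m t) = norm \<nu>"
    unfolding spectrum_def by auto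
  from eigenvalue_pow_mat_obtain[OF C nu(1)] obtain \<mu> where mu: "eigenvalue C \<mu>" "\<nu> = \<mu> ^ t" .
  have "norm \<mu> \<le> spectral_radius C"
    using spectral_radius_mem_max(2)[OF C n] mu(1) unfolding spectrum_def by auto
  then show ?thesis using nu mu by (simp add: norm_power power_mono)
qed

lemma pow_mat_Suc_left:
  fixes M :: "'a::semiring_1 mat"
  assumes M: "M \<in> carrier_mat n n"
  shows "M * M ^\<^sub>m t = M ^\<^sub>m Suc t"
proof (induction t)
  case (Suc t)
  have "M * M ^\<^sub>m Suc t = (M * M ^\<^sub>m t) * M"
    using M by (simp add: assoc_mult_mat[of M n n "M ^\<^sub>m t" n M n])
  then show ?case using Suc by simp
qed (use M in simp)

lemma foldr_replicate_mult_mat: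
  fixes M :: "'a::semiring_1 mat"
  assumes M: "M \<in> carrier_mat n n"
  shows "foldr (*) (replicate t M) (1\<^sub>m n) = M ^\<^sub>m t"
  using M by (induction t) (auto simp: pow_mat_Suc_left[OF M])

lemma srad_nonneg:
  assumes M: "M \<in> carrier_mat n n"
  shows "0 \<le> srad M"
proof (cases "n = 0")
  case False
  have C: "map_mat complex_of_real M \<in> carrier_mat n n" using M by auto
  from spectral_radius_mem_max(1)[OF C] False show ?thesis using M unfolding srad_def by auto
qed (use M in \<open>simp add: srad_def\<close>)

lemma srad_pow_mat_le:
  assumes M: "M \<in> carrier_mat n n"
  shows "srad (M ^\<^sub>m t) \<le> srad M ^ t"
proof (cases "n = 0")
  case True then show ?thesis using M unfolding srad_def by (cases t) auto
next
  case False
  have C: "map_mat complex_of_real M \<in> carrier_mat n n" using M by auto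
  have "map_mat complex_of_real (M ^\<^sub>m t) = map_mat complex_of_real M ^\<^sub>m t"
    by (rule of_real_hom.mat_hom_pow[OF M])
  then show ?thesis using spectral_radius_pow_mat_le[OF C, of t] False M unfolding srad_def by simp
qed

lemma jsr_singleton_le:
  assumes M: "M \<in> carrier_mat n n" and le: "srad M \<le> \<rho>"
  shows "jsr n {M} \<le> ereal \<rho>"
proof -
  have rho: "0 \<le> \<rho>" using srad_nonneg[OF M] le by simp
  have "root t (srad (M ^\<^sub>m t)) \<le> \<rho>" for t
  proof (cases "t = 0")
    case False
    have "srad (M ^\<^sub>m t) \<le> \<rho> ^ t"
      using srad_pow_mat_le[OF M, of t] power_mono[OF le srad_nonneg[OF M], of t] by linarith
    then have "root t (srad (M ^\<^sub>m t)) \<le> root t (\<rho> ^ t)" using False by (simp add: real_root_le_iff)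
    also have "\<dots> = \<rho>" using False rho by (simp add: real_root_power_cancel)
    finally show ?thesis .
  qed (use rho in simp)
  moreover have "Ms = replicate (length Ms) M" if "set Ms \<subseteq> {M}" for Ms
    using that by (induction Ms) auto
  ultimately have "root t (srad (foldr (*) Ms (1\<^sub>m n))) \<le> \<rho>" if "length Ms = t" "set Ms \<subseteq> {M}" for Ms t
    using that foldr_replicate_mult_mat[OF M] by metis
  then show ?thesis unfolding jsr_def
    by (intro Limsup_bounded always_eventually allI SUP_least) auto
qed

section \<open>Linear maps of coordinate spaces\<close>

lemma vnorm_eq_L2_set: "vnorm v = L2_set (\<lambda>i. v $ i) {..<dim_vec v}"
  unfolding vnorm_def L2_set_def ..

lemma abs_index_le_vnorm:
  assumes "j < dim_vec v"
  shows "\<bar>v $ j\<bar> \<le> vnorm v"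
proof -
  have "L2_set (\<lambda>i. \<bar>v $ i\<bar>) {..<dim_vec v} = vnorm v"
    unfolding vnorm_eq_L2_set L2_set_def by simp
  then show ?thesis
    using member_le_L2_set[of "{..<dim_vec v}" j "\<lambda>i. \<bar>v $ i\<bar>"] assms by simp
qed

lemma vnorm_le_sum_abs: "vnorm v \<le> (\<Sum>i<dim_vec v. \<bar>v $ i\<bar>)"
  unfolding vnorm_eq_L2_set by (rule L2_set_le_sum_abs)

lemma vnorm_mult_mat_vec_le:
  assumes A: "A \<in> carrier_mat n m" and v: "v \<in> carrier_vec m"
  shows "vnorm (A *\<^sub>v v) \<le> (\<Sum>i<n. \<Sum>j<m. \<bar>A $$ (i,j)\<bar>) * vnorm v"
proof -
  have entry: "\<bar>(A *\<^sub>v v) $ i\<bar> \<le> (\<Sum>j<m. \<bar>A $$ (i,j)\<bar>) * vnorm v" if i: "i < n" for i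
  proof -
    have "\<bar>(A *\<^sub>v v) $ i\<bar> = \<bar>\<Sum>j<m. A $$ (i,j) * v $ j\<bar>"
      using A v i by (simp add: scalar_prod_def lessThan_atLeast0)
    also have "\<dots> \<le> (\<Sum>j<m. \<bar>A $$ (i,j)\<bar> * \<bar>v $ j\<bar>)"
      by (rule order_trans[OF sum_abs]) (simp add: abs_mult)
    also have "\<dots> \<le> (\<Sum>j<m. \<bar>A $$ (i,j)\<bar> * vnorm v)"
      using v abs_index_le_vnorm[of _ v] by (intro sum_mono mult_left_mono) auto
    finally show ?thesis by (simp add: sum_distrib_right)
  qed
  have "vnorm (A *\<^sub>v v) \<le> (\<Sum>i<n. \<bar>(A *\<^sub>v v) $ i\<bar>)"
    using vnorm_le_sum_abs[of "A *\<^sub>v v"] A by simp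
  also have "\<dots> \<le> (\<Sum>i<n. (\<Sum>j<m. \<bar>A $$ (i,j)\<bar>) * vnorm v)"
    by (intro sum_mono entry) auto
  finally show ?thesis by (simp add: sum_distrib_right)
qed

lemma cont_on_vec_mult_mat_vec:
  fixes A :: "real mat"
  assumes A: "A \<in> carrier_mat n n"
  shows "cont_on_vec n (\<lambda>z. A *\<^sub>v z)"
  unfolding cont_on_vec_def
proof (intro ballI allI impI)
  fix x :: "real vec" and e :: real assume x: "x \<in> carrier_vec n" and e: "e > 0"
  define K where "K = (\<Sum>i<n. \<Sum>j<n. \<bar>A $$ (i,j)\<bar>)"
  have K: "0 \<le> K" unfolding K_def by (simp add: sum_nonneg)
  show "\<exists>d>0. \<forall>y\<in>carrier_vec n. vnorm (y - x) < d \<longrightarrow> vnorm (A *\<^sub>v y - A *\<^sub>v x) < e"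
  proof (intro exI[of _ "e / (K + 1)"] conjI ballI impI)
    fix y :: "real vec" assume y: "y \<in> carrier_vec n" and d: "vnorm (y - x) < e / (K + 1)"
    have "vnorm (A *\<^sub>v y - A *\<^sub>v x) = vnorm (A *\<^sub>v (y - x))"
      using A x y by (simp add: mult_minus_distrib_mat_vec)
    also have "\<dots> \<le> K * vnorm (y - x)"
      using vnorm_mult_mat_vec_le[OF A, of "y - x"] x y unfolding K_def by simp
    also have "\<dots> \<le> K * (e / (K + 1))" using d K by (intro mult_left_mono) auto
    also have "\<dots> < e" using K e by (simp add: field_simps)
    finally show "vnorm (A *\<^sub>v y - A *\<^sub>v x) < e" .
  qed (use e K in simp)
qed

lemma
  fixes A A' :: "real mat"
  assumes A: "A \<in> carrier_mat n n" and A': "A' \<in> carrier_mat n n"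
    and inv1: "A' * A = 1\<^sub>m n" and inv2: "A * A' = 1\<^sub>m n"
  shows the_inv_into_mult_mat_vec:
      "\<And>u. u \<in> carrier_vec n \<Longrightarrow> the_inv_into (carrier_vec n) (\<lambda>z. A *\<^sub>v z) u = A' *\<^sub>v u"
    and homeo_vec_mult_mat_vec: "homeo_vec n (\<lambda>z. A *\<^sub>v z)"
proof -
  have left: "A' *\<^sub>v (A *\<^sub>v z) = z" and right: "A *\<^sub>v (A' *\<^sub>v z) = z" if "z \<in> carrier_vec n" for z
    using that A A' inv1 inv2 by (simp_all add: assoc_mult_mat_vec[symmetric])
  have inj: "inj_on (\<lambda>z. A *\<^sub>v z) (carrier_vec n)"
    by (rule inj_on_inverseI[where g = "\<lambda>z. A' *\<^sub>v z"]) (use left in auto)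
  have "(\<lambda>z. A *\<^sub>v z) ` carrier_vec n = carrier_vec n"
  proof (intro equalityI subsetI)
    fix u :: "real vec" assume u: "u \<in> carrier_vec n"
    show "u \<in> (\<lambda>z. A *\<^sub>v z) ` carrier_vec n"
      using right[OF u] A' u by (intro image_eqI[of _ _ "A' *\<^sub>v u"]) auto
  qed (use A in auto)
  with inj have bij: "bij_betw (\<lambda>z. A *\<^sub>v z) (carrier_vec n) (carrier_vec n)"
    unfolding bij_betw_def by blast
  show inv: "the_inv_into (carrier_vec n) (\<lambda>z. A *\<^sub>v z) u = A' *\<^sub>v u" if u: "u \<in> carrier_vec n" for u
    by (rule the_inv_into_f_eq[OF inj]) (use right[OF u] A' u in auto)
  have "cont_on_vec n (the_inv_into (carrier_vec n) (\<lambda>z. A *\<^sub>v z))"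
    using cont_on_vec_mult_mat_vec[OF A'] unfolding cont_on_vec_def by (simp add: inv)
  then show "homeo_vec n (\<lambda>z. A *\<^sub>v z)"
    unfolding homeo_vec_def using bij cont_on_vec_mult_mat_vec[OF A] by auto
qed

lemma closed_mats_singleton:
  assumes B: "B \<in> carrier_mat m n"
  shows "closed_mats m n {B}"
  unfolding closed_mats_def
proof (intro conjI allI impI)
  fix X L assume L: "L \<in> carrier_mat m n" and X: "\<forall>t. X t \<in> {B}"
    and lim: "(\<lambda>t. mnorm (X t - L)) \<longlonglongrightarrow> 0"
  have "mnorm (B - L) = 0" using lim X by (simp add: LIMSEQ_const_iff)
  then have "(\<Sum>i<m. \<Sum>j<n. ((B - L) $$ (i,j))^2) = 0" using B L unfolding mnorm_def by simp
  then have "(B - L) $$ (i,j) = 0" if "i < m" "j < n" for i j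
    using that by (simp add: sum_nonneg sum_nonneg_eq_0_iff)
  then have "L = B" using B L by (intro eq_matI) auto
  then show "L \<in> {B}" by simp
qed (use B in simp)

section \<open>Rank factorization\<close>

lemma mult_mat_vec_unit_vec:
  fixes A :: "'a::semiring_1 mat"
  assumes A: "A \<in> carrier_mat n m" and i: "i < m"
  shows "A *\<^sub>v unit_vec m i = col A i"
proof (rule eq_vecI)
  fix k assume k: "k < dim_vec (col A i)"
  have "row A k \<in> carrier_vec m" using A by auto
  then show "(A *\<^sub>v unit_vec m i) $ k = col A i $ k" using A i k by (simp add: scalar_prod_right_unit)
qed (use A in auto)

context vec_space
begin

lemma maximal_lin_indpt_cols_exists:
  "\<exists>S. maximal S (\<lambda>T. T \<subseteq> set (cols A) \<and> lin_indpt T)"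
  using maximal_exists[of "(\<lambda>T. T \<subseteq> set (cols A) \<and> lin_indpt T)" "card (set (cols A))" "{}"]
  by (meson List.finite_set card_mono empty_iff empty_subsetI finite_lin_indpt2 rev_finite_subset)

lemma rank_eq_ncols_imp_distinct_cols:
  assumes A: "A \<in> carrier_mat n nc" and r: "rank A = nc"
  shows "distinct (cols A)"
proof (rule ccontr)
  assume nd: "\<not> distinct (cols A)"
  obtain S where max: "maximal S (\<lambda>T. T \<subseteq> set (cols A) \<and> lin_indpt T)"
    using maximal_lin_indpt_cols_exists by blast
  have "card S \<le> card (set (cols A))" using max by (simp add: card_mono maximal_def)
  also have "\<dots> < length (cols A)" using nd card_distinct card_length le_neq_implies_less by blast
  finally show False using rank_card_indpt[OF A max] r A by simp
qed

lemma rank_eq_ncols_iff_inj: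
  assumes A: "A \<in> carrier_mat n nc"
  shows "rank A = nc \<longleftrightarrow> (\<forall>v\<in>carrier_vec nc. A *\<^sub>v v = 0\<^sub>v n \<longrightarrow> v = 0\<^sub>v nc)"
proof
  assume r: "rank A = nc"
  note d = rank_eq_ncols_imp_distinct_cols[OF A r]
  show "\<forall>v\<in>carrier_vec nc. A *\<^sub>v v = 0\<^sub>v n \<longrightarrow> v = 0\<^sub>v nc"
    using lin_depI[OF A _ _ _ d] full_rank_lin_indpt[OF A r d] by blast
next
  assume inj: "\<forall>v\<in>carrier_vec nc. A *\<^sub>v v = 0\<^sub>v n \<longrightarrow> v = 0\<^sub>v nc"
  have d: "distinct (cols A)"
  proof (rule ccontr)
    assume "\<not> distinct (cols A)"
    then obtain i j where ij: "i < nc" "j < nc" "i \<noteq> j" "col A i = col A j"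
      using A by (auto simp: distinct_conv_nth)
    define v :: "'a vec" where "v = unit_vec nc i - unit_vec nc j"
    have "A *\<^sub>v v = 0\<^sub>v n"
      unfolding v_def using A ij by (simp add: mult_minus_distrib_mat_vec mult_mat_vec_unit_vec)
    then have "v $ i = 0" using inj ij unfolding v_def by fastforce
    then show False using ij unfolding v_def by simp
  qed
  have "lin_indpt (set (cols A))"
  proof
    assume "lin_dep (set (cols A))"
    from lin_depE[OF A this d] obtain v where "v \<in> carrier_vec nc" "v \<noteq> 0\<^sub>v nc" "A *\<^sub>v v = 0\<^sub>v n" .
    with inj show False by blast
  qed
  from lin_indpt_full_rank[OF A d this] show "rank A = nc" .
qed

lemma column_basis_obtain:
  assumes A: "A \<in> carrier_mat n nc" and r: "rank A = r"
  obtains \<alpha> where "\<alpha> \<in> carrier_mat n r" "rank \<alpha> = r"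
    "\<And>i. i < r \<Longrightarrow> \<exists>j<nc. col \<alpha> i = col A j"
    "\<And>j. j < nc \<Longrightarrow> \<exists>x\<in>carrier_vec r. col A j = \<alpha> *\<^sub>v x"
proof -
  obtain S where max: "maximal S (\<lambda>T. T \<subseteq> set (cols A) \<and> lin_indpt T)"
    using maximal_lin_indpt_cols_exists by blast
  have Scols: "S \<subseteq> set (cols A)" and Sli: "lin_indpt S" using max unfolding maximal_def by auto
  have colsC: "set (cols A) \<subseteq> carrier_vec n" using A by (auto simp: cols_def)
  with Scols have SC: "S \<subseteq> carrier_vec n" by auto
  obtain sl where sl: "distinct sl" "set sl = S"
    using finite_distinct_list[OF finite_subset[OF Scols]] by auto
  have len: "length sl = r" using sl rank_card_indpt[OF A max] r distinct_card by fastforce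
  define \<alpha> where "\<alpha> = mat_of_cols n sl"
  have \<alpha>C: "\<alpha> \<in> carrier_mat n r" unfolding \<alpha>_def mat_of_cols_def using len by simp
  have cols\<alpha>: "cols \<alpha> = sl" unfolding \<alpha>_def using SC sl by (intro cols_mat_of_cols) auto
  have "rank \<alpha> = r" using lin_indpt_full_rank[OF \<alpha>C] cols\<alpha> sl Sli by simp
  moreover have "\<exists>j<nc. col \<alpha> i = col A j" if i: "i < r" for i
  proof -
    have "col \<alpha> i = sl ! i" using cols_nth[of i \<alpha>] cols\<alpha> \<alpha>C i by simp
    moreover have "sl ! i \<in> set (cols A)" using Scols sl len i nth_mem by blast
    ultimately show ?thesis using A by (auto simp: cols_def)
  qed
  moreover have "\<exists>x\<in>carrier_vec r. col A j = \<alpha> *\<^sub>v x" if j: "j < nc" for j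
  proof -
    have cj: "col A j \<in> set (cols A)" using j A by (simp add: cols_def)
    have "col A j \<in> span S"
    proof (rule ccontr)
      assume ns: "col A j \<notin> span S"
      then have "col A j \<notin> S" using in_own_span[OF SC] by auto
      moreover have "lin_indpt (S \<union> {col A j})"
        using lin_dep_iff_in_span[OF SC Sli] cj colsC ns \<open>col A j \<notin> S\<close> by auto
      ultimately show False using max cj Scols unfolding maximal_def by blast
    qed
    then obtain c where "col A j = lincomb_list c sl"
      using span_list_as_span[of sl] SC sl unfolding span_list_def by auto
    also have "\<dots> = \<alpha> *\<^sub>v vec r c"
    proof -
      have "\<forall>w\<in>set sl. dim_vec w = n" using SC sl by auto
      from lincomb_list_as_mat_mult[OF this, of c] show ?thesis unfolding \<alpha>_def len .
    qed
    finally show ?thesis by auto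
  qed
  ultimately show ?thesis using that \<alpha>C by blast
qed

lemma rank_factorization:
  assumes A: "A \<in> carrier_mat n n" and r: "rank A = r"
  obtains \<alpha> \<beta> where "\<alpha> \<in> carrier_mat n r" "\<beta> \<in> carrier_mat n r" "rank \<alpha> = r" "rank \<beta> = r"
    "\<alpha> * transpose_mat \<beta> = A"
proof -
  obtain \<alpha> where \<alpha>C: "\<alpha> \<in> carrier_mat n r" and rank\<alpha>: "rank \<alpha> = r"
    and col\<alpha>: "\<And>i. i < r \<Longrightarrow> \<exists>j<n. col \<alpha> i = col A j"
    and coef: "\<And>j. j < n \<Longrightarrow> \<exists>x\<in>carrier_vec r. col A j = \<alpha> *\<^sub>v x"
    using column_basis_obtain[OF A r] by blast
  have inj\<alpha>: "\<forall>v\<in>carrier_vec r. \<alpha> *\<^sub>v v = 0\<^sub>v n \<longrightarrow> v = 0\<^sub>v r"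
    using rank_eq_ncols_iff_inj[OF \<alpha>C] rank\<alpha> by simp
  define cf where "cf j = (SOME x. x \<in> carrier_vec r \<and> col A j = \<alpha> *\<^sub>v x)" for j
  have cf: "cf j \<in> carrier_vec r" "col A j = \<alpha> *\<^sub>v cf j" if "j < n" for j
    unfolding cf_def using someI_ex[OF coef[OF that, unfolded Bex_def]] by auto
  define \<beta> where "\<beta> = mat n r (\<lambda>(j,i). cf j $ i)"
  have \<beta>C: "\<beta> \<in> carrier_mat n r" unfolding \<beta>_def by simp
  have row\<beta>: "row \<beta> j = cf j" if "j < n" for j
    using cf[OF that] that unfolding \<beta>_def by (intro eq_vecI) auto
  have prod: "\<alpha> * transpose_mat \<beta> = A"
  proof (rule eq_matI)
    fix i j assume i: "i < dim_row A" and j: "j < dim_col A"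
    have "(\<alpha> * transpose_mat \<beta>) $$ (i,j) = (\<alpha> *\<^sub>v cf j) $ i"
      using \<alpha>C \<beta>C i j A row\<beta>[of j] by simp
    also have "\<dots> = col A j $ i" using j A cf(2)[of j] by simp
    also have "\<dots> = A $$ (i,j)" using i j A by simp
    finally show "(\<alpha> * transpose_mat \<beta>) $$ (i,j) = A $$ (i,j)" .
  qed (use \<alpha>C \<beta>C A in auto)
  text \<open>Each column of \<open>\<alpha>\<close> is a column of \<open>A\<close>, so its coefficient vector is a unit vector
    and \<open>\<beta>\<close> contains the rows of the identity.\<close>
  have unit_row: "\<exists>j<n. cf j = unit_vec r i" if i: "i < r" for i
  proof -
    obtain j where j: "j < n" "col \<alpha> i = col A j" using col\<alpha>[OF i] by blast
    have "\<alpha> *\<^sub>v (cf j - unit_vec r i) = 0\<^sub>v n"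
      using cf[OF j(1)] j i \<alpha>C by (simp add: mult_minus_distrib_mat_vec mult_mat_vec_unit_vec)
    then have diff0: "cf j - unit_vec r i = 0\<^sub>v r" using inj\<alpha> cf[OF j(1)] by auto
    have "cf j = unit_vec r i"
    proof (rule eq_vecI)
      fix t assume t: "t < dim_vec (unit_vec r i)"
      from arg_cong[OF diff0, of "\<lambda>v. v $ t"] t cf(1)[OF j(1)]
      show "cf j $ t = unit_vec r i $ t" by simp
    qed (use cf(1)[OF j(1)] in simp)
    with j show ?thesis by blast
  qed
  have "v = 0\<^sub>v r" if v: "v \<in> carrier_vec r" and bv: "\<beta> *\<^sub>v v = 0\<^sub>v n" for v
  proof (rule eq_vecI)
    fix i assume "i < dim_vec (0\<^sub>v r)"
    then have i: "i < r" by simp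
    obtain j where j: "j < n" "cf j = unit_vec r i" using unit_row[OF i] by blast
    have "unit_vec r i \<bullet> v = (\<beta> *\<^sub>v v) $ j" using j row\<beta>[of j] \<beta>C by simp
    then show "v $ i = 0\<^sub>v r $ i" using bv i v j by (simp add: scalar_prod_left_unit)
  qed (use v in simp)
  then have "rank \<beta> = r" using rank_eq_ncols_iff_inj[OF \<beta>C] by blast
  with \<alpha>C \<beta>C rank\<alpha> prod that show ?thesis by blast
qed

lemma rank_uminus_of_full:
  assumes A: "A \<in> carrier_mat n nc" and r: "rank A = nc"
  shows "rank (- A) = nc"
proof -
  have "v = 0\<^sub>v nc" if v: "v \<in> carrier_vec nc" and Av: "(- A) *\<^sub>v v = 0\<^sub>v n" for v
  proof -
    have "(- A) *\<^sub>v v = - (A *\<^sub>v v)"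
      using A v by (intro eq_vecI) (auto simp: scalar_prod_uminus_left)
    then have "A *\<^sub>v v = 0\<^sub>v n" using Av A v by (metis uminus_uminus_vec uminus_zero_vec)
    then show ?thesis using rank_eq_ncols_iff_inj[OF A] r v by blast
  qed
  then show ?thesis using rank_eq_ncols_iff_inj[of "- A"] A by simp
qed

end

section \<open>The matrices of a linear VAR\<close>

text \<open>The matrices of the linear VAR over an arbitrary commutative ring, so that they can be
  evaluated at complex and at polynomial arguments: \<open>Gamma_gen\<close>, \<open>Gamma_stack\<close>, \<open>shift_mat\<close>,
  \<open>embed_mat\<close> and \<open>alpha_block\<close> are \<open>\<Gamma>\<^sub>j\<close>, \<open>\<^bold>g\<close>, \<open>D\<close>, \<open>E\<close> and \<open>\<^bold>\<alpha>\<close>. \<open>beta_block\<close> is \<open>\<^bold>\<beta>\<^sup>T\<close>,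
  the matrix of the linear map \<open>z \<mapsto> \<^bold>\<theta>(f\<^sub>0\<^sup>-\<^sup>1(z)) + \<^bold>D\<^sub>0 z\<close> of condition (iii) for \<open>\<theta>(z) = \<beta>\<^sup>T z\<close>,
  with \<open>\<Phi>\<^sub>0\<^sup>-\<^sup>1\<close> passed as \<open>P0i\<close>.\<close>

definition Gamma_gen :: "nat \<Rightarrow> nat \<Rightarrow> (nat \<Rightarrow> 'a::comm_ring_1 mat) \<Rightarrow> nat \<Rightarrow> 'a mat" where
  "Gamma_gen p k Ph j = mat p p (\<lambda>(a,b). - (\<Sum>i\<in>{j+1..k}. Ph i $$ (a,b)))"

definition Phi_eval :: "nat \<Rightarrow> nat \<Rightarrow> (nat \<Rightarrow> 'a::comm_ring_1 mat) \<Rightarrow> 'a \<Rightarrow> 'a mat" where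
  "Phi_eval p k Ph z = mat p p (\<lambda>(a,b). Ph 0 $$ (a,b) - (\<Sum>i\<in>{1..k}. Ph i $$ (a,b) * z^i))"

definition Psi_eval :: "nat \<Rightarrow> nat \<Rightarrow> (nat \<Rightarrow> 'a::comm_ring_1 mat) \<Rightarrow> 'a \<Rightarrow> 'a mat" where
  "Psi_eval p k Ph z = mat p p (\<lambda>(a,b). Ph 0 $$ (a,b) - (\<Sum>j\<in>{1..k-1}. Gamma_gen p k Ph j $$ (a,b) * z^j))"

definition Gamma_stack :: "nat \<Rightarrow> nat \<Rightarrow> (nat \<Rightarrow> 'a::comm_ring_1 mat) \<Rightarrow> 'a mat" where
  "Gamma_stack p k Ph = mat (p*(k-1)) p (\<lambda>(i,j). Gamma_gen p k Ph (i div p + 1) $$ (i mod p, j))"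

definition shift_mat :: "nat \<Rightarrow> nat \<Rightarrow> 'a::comm_ring_1 mat" where
  "shift_mat p k = mat (p*(k-1)) (p*(k-1)) (\<lambda>(i,j). if i = j then -1 else if j = i + p then 1 else 0)"

definition embed_mat :: "nat \<Rightarrow> nat \<Rightarrow> 'a::comm_ring_1 mat" where
  "embed_mat p k = mat (p*(k-1)) p (\<lambda>(i,j). if i = j then 1 else 0)"

definition alpha_block :: "nat \<Rightarrow> nat \<Rightarrow> nat \<Rightarrow> 'a::comm_ring_1 mat \<Rightarrow> 'a mat" where
  "alpha_block p k r A = four_block_mat A (transpose_mat (embed_mat p k)) (0\<^sub>m (p*(k-1)) r) (1\<^sub>m (p*(k-1)))"

definition beta_block :: "nat \<Rightarrow> nat \<Rightarrow> nat \<Rightarrow> (nat \<Rightarrow> 'a::comm_ring_1 mat) \<Rightarrow> 'a mat \<Rightarrow> 'a mat \<Rightarrow> 'a mat" where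
  "beta_block p k r Ph Bt P0i =
     four_block_mat (Bt * P0i) (0\<^sub>m r (p*(k-1))) (Gamma_stack p k Ph * P0i) (shift_mat p k)"

definition companion :: "nat \<Rightarrow> nat \<Rightarrow> nat \<Rightarrow> (nat \<Rightarrow> 'a::comm_ring_1 mat) \<Rightarrow> 'a mat \<Rightarrow> 'a mat \<Rightarrow> 'a mat \<Rightarrow> 'a mat" where
  "companion p k r Ph A Bt P0i = 1\<^sub>m (r + p*(k-1)) + beta_block p k r Ph Bt P0i * alpha_block p k r A"

lemma var_dims [simp]:
  "dim_row (Gamma_gen p k Ph j) = p" "dim_col (Gamma_gen p k Ph j) = p"
  "dim_row (Phi_eval p k Ph z) = p" "dim_col (Phi_eval p k Ph z) = p"
  "dim_row (Psi_eval p k Ph z) = p" "dim_col (Psi_eval p k Ph z) = p"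
  "dim_row (Gamma_stack p k Ph) = p*(k-1)" "dim_col (Gamma_stack p k Ph) = p"
  "dim_row (shift_mat p k :: 'a::comm_ring_1 mat) = p*(k-1)"
  "dim_col (shift_mat p k :: 'a::comm_ring_1 mat) = p*(k-1)"
  "dim_row (embed_mat p k :: 'a::comm_ring_1 mat) = p*(k-1)"
  "dim_col (embed_mat p k :: 'a::comm_ring_1 mat) = p"
  by (simp_all add: Gamma_gen_def Phi_eval_def Psi_eval_def Gamma_stack_def shift_mat_def embed_mat_def)

lemma var_carrier_mat:
  "Gamma_gen p k Ph j \<in> carrier_mat p p" "Phi_eval p k Ph z \<in> carrier_mat p p"
  "Psi_eval p k Ph z \<in> carrier_mat p p" "Gamma_stack p k Ph \<in> carrier_mat (p*(k-1)) p"
  "shift_mat p k \<in> carrier_mat (p*(k-1)) (p*(k-1))" "embed_mat p k \<in> carrier_mat (p*(k-1)) p"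
  by auto

lemma alpha_block_carrier_mat:
  "A \<in> carrier_mat p r \<Longrightarrow> alpha_block p k r A \<in> carrier_mat (p + p*(k-1)) (r + p*(k-1))"
  unfolding alpha_block_def by (intro four_block_carrier_mat) auto

lemma beta_block_carrier_mat:
  "Bt \<in> carrier_mat r p \<Longrightarrow> P0i \<in> carrier_mat p p \<Longrightarrow>
    beta_block p k r Ph Bt P0i \<in> carrier_mat (r + p*(k-1)) (p + p*(k-1))"
  unfolding beta_block_def by (intro four_block_carrier_mat) auto

lemma companion_carrier_mat:
  assumes "A \<in> carrier_mat p r" "Bt \<in> carrier_mat r p" "P0i \<in> carrier_mat p p"
  shows "companion p k r Ph A Bt P0i \<in> carrier_mat (r + p*(k-1)) (r + p*(k-1))"
  unfolding companion_def
  using mult_carrier_mat[OF beta_block_carrier_mat[OF assms(2,3)] alpha_block_carrier_mat[OF assms(1)]]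
  by simp

lemma Phi_eval_split:
  "Phi_eval p k Ph z = (1 - z) \<cdot>\<^sub>m Psi_eval p k Ph z + z \<cdot>\<^sub>m Phi_eval p k Ph 1"
proof (rule eq_matI)
  fix a b assume "a < dim_row ((1 - z) \<cdot>\<^sub>m Psi_eval p k Ph z + z \<cdot>\<^sub>m Phi_eval p k Ph 1)"
    "b < dim_col ((1 - z) \<cdot>\<^sub>m Psi_eval p k Ph z + z \<cdot>\<^sub>m Phi_eval p k Ph 1)"
  then have ab: "a < p" "b < p" by auto
  have "(\<Sum>j\<in>{1..k-1}. Gamma_gen p k Ph j $$ (a,b) * z^j) = - (\<Sum>j\<in>{1..k-1}. (\<Sum>i\<in>{j+1..k}. Ph i $$ (a,b)) * z^j)"
    using ab by (simp add: Gamma_gen_def sum_negf)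
  then show "Phi_eval p k Ph z $$ (a,b) = ((1 - z) \<cdot>\<^sub>m Psi_eval p k Ph z + z \<cdot>\<^sub>m Phi_eval p k Ph 1) $$ (a,b)"
    using ab sum_powers_split_at_one[of "Ph 0 $$ (a,b)" "\<lambda>i. Ph i $$ (a,b)" z k]
    by (simp add: Phi_eval_def Psi_eval_def)
qed auto

lemma index_mult_mat_vec_sum:
  assumes "M \<in> carrier_mat n m" "x \<in> carrier_vec m" "s < n"
  shows "(M *\<^sub>v x) $ s = (\<Sum>b<m. M $$ (s,b) * x $ b)"
  using assms by (simp add: scalar_prod_def lessThan_atLeast0)

lemma index_Psi_eval_mult_vec:
  assumes x: "x \<in> carrier_vec p" and s: "s < p"
  shows "(Psi_eval p k Ph z *\<^sub>v x) $ s
    = (\<Sum>b<p. Ph 0 $$ (s,b) * x $ b) - (\<Sum>j\<in>{1..k-1}. z^j * (Gamma_gen p k Ph j *\<^sub>v x) $ s)"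
proof -
  have "(Psi_eval p k Ph z *\<^sub>v x) $ s
      = (\<Sum>b<p. Ph 0 $$ (s,b) * x $ b) - (\<Sum>b<p. \<Sum>j\<in>{1..k-1}. z^j * (Gamma_gen p k Ph j $$ (s,b) * x $ b))"
    using x s unfolding index_mult_mat_vec_sum[OF var_carrier_mat(3) x s] sum_subtractf[symmetric]
    by (intro sum.cong refl) (simp add: Psi_eval_def algebra_simps sum_distrib_right sum_distrib_left)
  also have "(\<Sum>b<p. \<Sum>j\<in>{1..k-1}. z^j * (Gamma_gen p k Ph j $$ (s,b) * x $ b))
      = (\<Sum>j\<in>{1..k-1}. z^j * (Gamma_gen p k Ph j *\<^sub>v x) $ s)"
    by (subst sum.swap) (simp add: index_mult_mat_vec_sum[OF var_carrier_mat(1) x s] sum_distrib_left)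
  finally show ?thesis .
qed

section \<open>Block structure of the companion matrix\<close>

text \<open>Entry \<open>s\<close> of the \<open>j\<close>-th block of a vector of length \<open>p(k-1)\<close>, for \<open>1 \<le> j < k\<close>; it is \<open>0\<close>
  for other \<open>j\<close>, which encodes the boundary condition of the block recursions below.\<close>

definition block_entry :: "nat \<Rightarrow> nat \<Rightarrow> 'a::zero vec \<Rightarrow> nat \<Rightarrow> nat \<Rightarrow> 'a" where
  "block_entry p k w j s = (if 1 \<le> j \<and> j < k then w $ ((j-1)*p + s) else 0)"

lemma block_index_less:
  fixes j k s p :: nat
  assumes "1 \<le> j" "j < k" "s < p"
  shows "(j-1)*p + s < p*(k-1)"
proof -
  have "(j-1)*p + s < (j-1)*p + p" using assms(3) by (rule add_strict_left_mono)
  also have "\<dots> = j*p" using assms by (cases j) auto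
  also have "\<dots> \<le> (k-1)*p" using assms by (intro mult_le_mono1) simp
  finally show ?thesis by (simp add: mult.commute)
qed

lemma block_index_next_less_iff:
  fixes j k s p :: nat
  assumes j: "1 \<le> j" "j < k" and s: "s < p"
  shows "(j-1)*p + s + p < p*(k-1) \<longleftrightarrow> Suc j < k"
proof
  assume "Suc j < k"
  then show "(j-1)*p + s + p < p*(k-1)" using block_index_less[of "Suc j" k s p] j s by (cases j) auto
next
  assume "(j-1)*p + s + p < p*(k-1)"
  then have "j * p < (k - 1) * p" using j by (cases j) (auto simp: mult.commute)
  then show "Suc j < k" by auto
qed

lemma block_index_div_mod:
  fixes j s p :: nat
  assumes "s < p"
  shows "((j-1)*p + s) div p = j - 1" "((j-1)*p + s) mod p = s"
  using assms by (simp_all add: add.commute[of "_ * p"])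

lemma block_entry_eq_index:
  assumes "1 \<le> j" "j < k"
  shows "block_entry p k w j s = w $ ((j-1)*p + s)"
  using assms unfolding block_entry_def by simp

lemma block_Gamma_stack_mult_vec:
  assumes x: "x \<in> carrier_vec p" and j: "1 \<le> j" "j < k" and s: "s < p"
  shows "(Gamma_stack p k Ph *\<^sub>v x) $ ((j-1)*p + s) = (Gamma_gen p k Ph j *\<^sub>v x) $ s"
  using x s block_index_less[OF j s] j block_index_div_mod[OF s, of j]
  by (simp add: Gamma_stack_def Gamma_gen_def scalar_prod_def)

lemma block_shift_mat_mult_vec:
  assumes w: "w \<in> carrier_vec (p*(k-1))" and j: "1 \<le> j" "j < k" and s: "s < p"
  shows "(shift_mat p k *\<^sub>v w) $ ((j-1)*p + s) = block_entry p k w (Suc j) s - block_entry p k w j s"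
proof -
  define l where "l = (j-1)*p + s"
  have l: "l < p*(k-1)" unfolding l_def by (rule block_index_less[OF j s])
  have "(shift_mat p k *\<^sub>v w) $ l
      = (\<Sum>c<p*(k-1). (if c = l + p then w $ c else 0)) - (\<Sum>c<p*(k-1). (if c = l then w $ c else 0))"
    using w l s unfolding sum_subtractf[symmetric]
    by (simp add: shift_mat_def scalar_prod_def lessThan_atLeast0 cong: if_cong) (intro sum.cong; auto)
  also have "\<dots> = (if l + p < p*(k-1) then w $ (l + p) else 0) - w $ l"
    using l by simp
  also have "(if l + p < p*(k-1) then w $ (l + p) else 0) = block_entry p k w (Suc j) s"
  proof -
    have "l + p = j*p + s" unfolding l_def using j by (cases j) auto
    then show ?thesis
      using block_index_next_less_iff[OF j s, folded l_def] unfolding block_entry_def by simp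
  qed
  finally show ?thesis unfolding l_def block_entry_eq_index[OF j] .
qed

lemma embed_mat_transpose_mult_vec:
  assumes w: "w \<in> carrier_vec (p*(k-1))" and k: "k \<ge> 1" and s: "s < p"
  shows "(transpose_mat (embed_mat p k) *\<^sub>v w) $ s = block_entry p k w 1 s"
proof -
  have ET: "transpose_mat (embed_mat p k) \<in> carrier_mat p (p*(k-1))"
    using var_carrier_mat(6) by (simp only: transpose_carrier_mat)
  have "transpose_mat (embed_mat p k) $$ (s, c) * w $ c = (if c = s then w $ c else 0)"
    if "c \<in> {..<p*(k-1)}" for c
    using that s by (simp add: embed_mat_def)
  then have "(transpose_mat (embed_mat p k) *\<^sub>v w) $ s = (\<Sum>c<p*(k-1). if c = s then w $ c else 0)"
    unfolding index_mult_mat_vec_sum[OF ET w s] by (rule sum.cong[OF refl])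
  also have "\<dots> = block_entry p k w 1 s"
  proof (cases "k = 1")
    case False
    then have "s < p*(k-1)" using k s block_index_less[of 1 k s p] by simp
    then show ?thesis using False k unfolding block_entry_def by simp
  qed (simp add: block_entry_def)
  finally show ?thesis .
qed

lemma block_entries_zero_imp_zero:
  assumes w: "w \<in> carrier_vec (p*(k-1))"
    and zero: "\<And>j s. 1 \<le> j \<Longrightarrow> j < k \<Longrightarrow> s < p \<Longrightarrow> block_entry p k w j s = 0"
  shows "w = 0\<^sub>v (p*(k-1))"
proof (rule eq_vecI)
  fix l assume "l < dim_vec (0\<^sub>v (p*(k-1)))"
  then have l: "l < p*(k-1)" by simp
  then have p: "p > 0" by (cases p) auto
  have "l div p < k - 1" using l p by (simp add: div_less_iff_less_mult mult.commute)
  then have j: "1 \<le> l div p + 1" "l div p + 1 < k" by auto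
  have "block_entry p k w (l div p + 1) (l mod p) = w $ (l div p * p + l mod p)"
    using block_entry_eq_index[OF j, where p=p and w=w and s="l mod p"] by simp
  then have "w $ l = block_entry p k w (l div p + 1) (l mod p)"
    by (simp only: div_mult_mod_eq)
  then show "w $ l = 0\<^sub>v (p*(k-1)) $ l" using zero[OF j] l p by simp
qed (use w in simp)

lemma zero_mult_mat_vec [simp]:
  "v \<in> carrier_vec m \<Longrightarrow> 0\<^sub>m n m *\<^sub>v v = (0\<^sub>v n :: 'a::semiring_0 vec)"
  by (rule eq_vecI) (auto simp: scalar_prod_def)

lemma companion_mult_vec:
  assumes A: "A \<in> carrier_mat p r" and Bt: "Bt \<in> carrier_mat r p" and P0i: "P0i \<in> carrier_mat p p"
    and a: "a \<in> carrier_vec r" and w: "w \<in> carrier_vec (p*(k-1))"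
    and x: "x = P0i *\<^sub>v (A *\<^sub>v a + transpose_mat (embed_mat p k) *\<^sub>v w)"
  shows "companion p k r Ph A Bt P0i *\<^sub>v (a @\<^sub>v w)
    = (a + Bt *\<^sub>v x) @\<^sub>v (w + (Gamma_stack p k Ph *\<^sub>v x + shift_mat p k *\<^sub>v w))"
proof -
  let ?y = "A *\<^sub>v a + transpose_mat (embed_mat p k) *\<^sub>v w"
  have ET: "transpose_mat (embed_mat p k) \<in> carrier_mat p (p*(k-1))"
    using var_carrier_mat(6) by (simp only: transpose_carrier_mat)
  have y: "?y \<in> carrier_vec p" using mult_mat_vec_carrier[OF A a] mult_mat_vec_carrier[OF ET w] by simp
  have v: "a @\<^sub>v w \<in> carrier_vec (r + p*(k-1))" using a w by (rule append_carrier_vec)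
  have xC: "x \<in> carrier_vec p" unfolding x using P0i y by (rule mult_mat_vec_carrier)
  note Al = alpha_block_carrier_mat[OF A, of k] and Be = beta_block_carrier_mat[OF Bt P0i, of k Ph]
  have "companion p k r Ph A Bt P0i *\<^sub>v (a @\<^sub>v w)
      = (a @\<^sub>v w) + beta_block p k r Ph Bt P0i *\<^sub>v (alpha_block p k r A *\<^sub>v (a @\<^sub>v w))"
    unfolding companion_def add_mult_distrib_mat_vec[OF one_carrier_mat mult_carrier_mat[OF Be Al] v]
      assoc_mult_mat_vec[OF Be Al v] using v by simp
  also have "alpha_block p k r A *\<^sub>v (a @\<^sub>v w) = ?y @\<^sub>v w"
    unfolding alpha_block_def four_block_mat_mult_vec[OF A ET zero_carrier_mat one_carrier_mat a w]
    using a w by simp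
  also have "beta_block p k r Ph Bt P0i *\<^sub>v (?y @\<^sub>v w)
      = (Bt *\<^sub>v x) @\<^sub>v (Gamma_stack p k Ph *\<^sub>v x + shift_mat p k *\<^sub>v w)"
    unfolding beta_block_def four_block_mat_mult_vec[OF mult_carrier_mat[OF Bt P0i] zero_carrier_mat
      mult_carrier_mat[OF var_carrier_mat(4) P0i] var_carrier_mat(5) y w]
    unfolding x using Bt P0i y w
    by (simp add: assoc_mult_mat_vec[OF Bt P0i y] assoc_mult_mat_vec[OF var_carrier_mat(4) P0i y])
  also have "(a @\<^sub>v w) + ((Bt *\<^sub>v x) @\<^sub>v (Gamma_stack p k Ph *\<^sub>v x + shift_mat p k *\<^sub>v w))
      = (a + Bt *\<^sub>v x) @\<^sub>v (w + (Gamma_stack p k Ph *\<^sub>v x + shift_mat p k *\<^sub>v w))"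
  proof (rule append_vec_add[OF a _ w])
    show "Bt *\<^sub>v x \<in> carrier_vec r" by (rule mult_mat_vec_carrier[OF Bt xC])
    show "Gamma_stack p k Ph *\<^sub>v x + shift_mat p k *\<^sub>v w \<in> carrier_vec (p*(k-1))"
      by (intro add_carrier_vec mult_mat_vec_carrier[OF var_carrier_mat(4) xC]
          mult_mat_vec_carrier[OF var_carrier_mat(5) w])
  qed
  finally show ?thesis .
qed

lemma companion_eigen_equations:
  fixes \<mu> :: "'a::comm_ring_1"
  assumes A: "A \<in> carrier_mat p r" and Bt: "Bt \<in> carrier_mat r p" and P0i: "P0i \<in> carrier_mat p p"
    and a: "a \<in> carrier_vec r" and w: "w \<in> carrier_vec (p*(k-1))"
    and x: "x = P0i *\<^sub>v (A *\<^sub>v a + transpose_mat (embed_mat p k) *\<^sub>v w)"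
    and eig: "companion p k r Ph A Bt P0i *\<^sub>v (a @\<^sub>v w) = \<mu> \<cdot>\<^sub>v (a @\<^sub>v w)"
  shows "Bt *\<^sub>v x = (\<mu> - 1) \<cdot>\<^sub>v a"
    and "\<And>j s. 1 \<le> j \<Longrightarrow> j < k \<Longrightarrow> s < p \<Longrightarrow>
      \<mu> * block_entry p k w j s = (Gamma_gen p k Ph j *\<^sub>v x) $ s + block_entry p k w (Suc j) s"
proof -
  have ET: "transpose_mat (embed_mat p k) \<in> carrier_mat p (p*(k-1))"
    using var_carrier_mat(6) by (simp only: transpose_carrier_mat)
  have xC: "x \<in> carrier_vec p"
    unfolding x by (intro mult_mat_vec_carrier[OF P0i] add_carrier_vec mult_mat_vec_carrier[OF A a]
      mult_mat_vec_carrier[OF ET w])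
  have "\<mu> \<cdot>\<^sub>v (a @\<^sub>v w) = (\<mu> \<cdot>\<^sub>v a) @\<^sub>v (\<mu> \<cdot>\<^sub>v w)"
  proof (rule eq_vecI)
    fix i assume "i < dim_vec ((\<mu> \<cdot>\<^sub>v a) @\<^sub>v (\<mu> \<cdot>\<^sub>v w))"
    then show "(\<mu> \<cdot>\<^sub>v (a @\<^sub>v w)) $ i = ((\<mu> \<cdot>\<^sub>v a) @\<^sub>v (\<mu> \<cdot>\<^sub>v w)) $ i"
      by (cases "i < dim_vec a") auto
  qed simp
  then have "(a + Bt *\<^sub>v x) @\<^sub>v (w + (Gamma_stack p k Ph *\<^sub>v x + shift_mat p k *\<^sub>v w))
      = (\<mu> \<cdot>\<^sub>v a) @\<^sub>v (\<mu> \<cdot>\<^sub>v w)"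
    using eig unfolding companion_mult_vec[OF A Bt P0i a w x] by simp
  moreover have "a + Bt *\<^sub>v x \<in> carrier_vec r" "\<mu> \<cdot>\<^sub>v a \<in> carrier_vec r"
    using a by (auto intro: add_carrier_vec mult_mat_vec_carrier[OF Bt xC])
  ultimately have ea: "a + Bt *\<^sub>v x = \<mu> \<cdot>\<^sub>v a"
    and ew: "w + (Gamma_stack p k Ph *\<^sub>v x + shift_mat p k *\<^sub>v w) = \<mu> \<cdot>\<^sub>v w"
    using append_vec_eq by blast+
  have "(Bt *\<^sub>v x) $ i = (\<mu> - 1) * a $ i" if i: "i < r" for i
  proof -
    have "a $ i + (Bt *\<^sub>v x) $ i = \<mu> * a $ i" using arg_cong[OF ea, of "\<lambda>v. v $ i"] i a Bt by simp
    then have "(Bt *\<^sub>v x) $ i = \<mu> * a $ i - a $ i" by (simp add: eq_diff_eq add.commute)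
    then show ?thesis by (simp add: left_diff_distrib)
  qed
  then show "Bt *\<^sub>v x = (\<mu> - 1) \<cdot>\<^sub>v a" using a Bt by (intro eq_vecI) auto
  fix j s assume j: "1 \<le> j" "j < k" and s: "s < p"
  note l = block_index_less[OF j s]
  have "\<mu> * w $ ((j-1)*p + s)
      = w $ ((j-1)*p + s) + (Gamma_stack p k Ph *\<^sub>v x) $ ((j-1)*p + s) + (shift_mat p k *\<^sub>v w) $ ((j-1)*p + s)"
    using arg_cong[OF ew, of "\<lambda>v. v $ ((j-1)*p + s)"] l w xC by (simp add: add.assoc)
  then show "\<mu> * block_entry p k w j s = (Gamma_gen p k Ph j *\<^sub>v x) $ s + block_entry p k w (Suc j) s"
    unfolding block_Gamma_stack_mult_vec[OF xC j s] block_shift_mat_mult_vec[OF w j s]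
      block_entry_eq_index[OF j] by simp
qed

lemma sum_powers_telescope:
  fixes f :: "nat \<Rightarrow> 'a::comm_ring_1"
  shows "(\<Sum>j\<in>{1..m}. z^(j-1) * f j - z^j * f (Suc j)) = f 1 - z^m * f (Suc m)"
  by (induction m) (auto simp: sum.cl_ivl_Suc)

text \<open>Summing the block recursion against powers of \<open>z = 1/\<mu>\<close> telescopes to the first block.\<close>

lemma index_Psi_eval_mult_vec_eigen:
  fixes \<mu> z :: "'a::comm_ring_1"
  assumes k: "k \<ge> 1" and P0: "Ph 0 \<in> carrier_mat p p" and x: "x \<in> carrier_vec p" and s: "s < p"
    and z: "z * \<mu> = 1"
    and rec: "\<And>j. 1 \<le> j \<Longrightarrow> j < k \<Longrightarrow>
      \<mu> * block_entry p k w j s = (Gamma_gen p k Ph j *\<^sub>v x) $ s + block_entry p k w (Suc j) s"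
  shows "(Psi_eval p k Ph z *\<^sub>v x) $ s = (Ph 0 *\<^sub>v x) $ s - block_entry p k w 1 s"
proof -
  let ?u = "block_entry p k w"
  have "z^j * (Gamma_gen p k Ph j *\<^sub>v x) $ s = z^(j-1) * ?u j s - z^j * ?u (Suc j) s"
    if j: "j \<in> {1..k-1}" for j
  proof -
    have jk: "1 \<le> j" "j < k" using j k by auto
    have g: "(Gamma_gen p k Ph j *\<^sub>v x) $ s = \<mu> * ?u j s - ?u (Suc j) s"
      using rec[OF jk] by (simp add: eq_diff_eq)
    have "z^j * (Gamma_gen p k Ph j *\<^sub>v x) $ s = (z^j * \<mu>) * ?u j s - z^j * ?u (Suc j) s"
      unfolding g by (simp add: algebra_simps)
    also have "z^j * \<mu> = z^(j-1)"
    proof -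
      obtain n where n: "j = Suc n" using jk by (cases j) auto
      then have "z^j * \<mu> = z^n * (z * \<mu>)" by (simp add: algebra_simps)
      then show ?thesis using z n by simp
    qed
    finally show ?thesis .
  qed
  then have "(\<Sum>j\<in>{1..k-1}. z^j * (Gamma_gen p k Ph j *\<^sub>v x) $ s)
      = (\<Sum>j\<in>{1..k-1}. z^(j-1) * ?u j s - z^j * ?u (Suc j) s)"
    by (rule sum.cong[OF refl])
  also have "\<dots> = ?u 1 s - z^(k-1) * ?u (Suc (k-1)) s"
    by (rule sum_powers_telescope)
  also have "?u (Suc (k-1)) s = 0" unfolding block_entry_def using k by simp
  finally show ?thesis
    unfolding index_Psi_eval_mult_vec[OF x s] index_mult_mat_vec_sum[OF P0 x s] by simp
qed

lemma block_recursion_zero: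
  fixes \<mu> :: "'a::field"
  assumes w: "w \<in> carrier_vec (p*(k-1))" and \<mu>: "\<mu> \<noteq> 0"
    and rec: "\<And>j s. 1 \<le> j \<Longrightarrow> j < k \<Longrightarrow> s < p \<Longrightarrow> \<mu> * block_entry p k w j s = block_entry p k w (Suc j) s"
  shows "w = 0\<^sub>v (p*(k-1))"
proof (rule block_entries_zero_imp_zero[OF w])
  fix j s assume j: "1 \<le> j" "j < k" and s: "s < p"
  have "block_entry p k w (k - d) s = 0" for d
  proof (induction d)
    case (Suc d)
    show ?case
    proof (cases "1 \<le> k - Suc d")
      case True
      then have "Suc (k - Suc d) = k - d" by simp
      then have "\<mu> * block_entry p k w (k - Suc d) s = 0"
        using rec[of "k - Suc d" s] True s Suc.IH by simp
      then show ?thesis using \<mu> by simp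
    qed (simp add: block_entry_def)
  qed (simp add: block_entry_def)
  from this[of "k - j"] show "block_entry p k w j s = 0" using j by simp
qed

section \<open>The determinant of the matrix polynomial\<close>

text \<open>Multiplying the bordered matrix on the right by a block triangular matrix turns its upper left
  block into \<open>(1 - z) \<Psi>(z) - z A B\<^sup>T = \<Phi>(z)\<close>.\<close>

lemma det_bordered_mult_power:
  fixes z :: "'a::idom"
  assumes A: "A \<in> carrier_mat p r" and Bt: "Bt \<in> carrier_mat r p"
    and AB1: "A * Bt = - Phi_eval p k Ph 1"
  shows "det (four_block_mat (Psi_eval p k Ph z) A (z \<cdot>\<^sub>m Bt) ((1 - z) \<cdot>\<^sub>m 1\<^sub>m r)) * (1 - z)^p
    = det (Phi_eval p k Ph z) * (1 - z)^r"
proof -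
  define G where "G = four_block_mat (Psi_eval p k Ph z) A (z \<cdot>\<^sub>m Bt) ((1 - z) \<cdot>\<^sub>m 1\<^sub>m r)"
  define R where "R = four_block_mat ((1 - z) \<cdot>\<^sub>m 1\<^sub>m p) (0\<^sub>m p r) ((- z) \<cdot>\<^sub>m Bt) (1\<^sub>m r)"
  note Psi = var_carrier_mat(3)[of p k Ph z]
  have GC: "G \<in> carrier_mat (p + r) (p + r)" unfolding G_def
    using Psi A Bt by (intro four_block_carrier_mat) auto
  have RC: "R \<in> carrier_mat (p + r) (p + r)" unfolding R_def
    using Bt by (intro four_block_carrier_mat) auto
  have "Psi_eval p k Ph z * ((1 - z) \<cdot>\<^sub>m 1\<^sub>m p) + A * ((- z) \<cdot>\<^sub>m Bt) = Phi_eval p k Ph z"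
  proof -
    have "Psi_eval p k Ph z * ((1 - z) \<cdot>\<^sub>m 1\<^sub>m p) = (1 - z) \<cdot>\<^sub>m Psi_eval p k Ph z"
      using mult_smult_distrib[OF Psi one_carrier_mat] Psi by simp
    moreover have "A * ((- z) \<cdot>\<^sub>m Bt) = (- z) \<cdot>\<^sub>m (- Phi_eval p k Ph 1)"
      using mult_smult_distrib[OF A Bt] AB1 by simp
    ultimately show ?thesis unfolding Phi_eval_split[of p k Ph z] by (intro eq_matI) auto
  qed
  moreover have "(z \<cdot>\<^sub>m Bt) * ((1 - z) \<cdot>\<^sub>m 1\<^sub>m p) + ((1 - z) \<cdot>\<^sub>m 1\<^sub>m r) * ((- z) \<cdot>\<^sub>m Bt) = 0\<^sub>m r p"
  proof -
    have "(z \<cdot>\<^sub>m Bt) * ((1 - z) \<cdot>\<^sub>m 1\<^sub>m p) = (1 - z) \<cdot>\<^sub>m (z \<cdot>\<^sub>m Bt)"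
      using mult_smult_distrib[OF smult_carrier_mat[OF Bt] one_carrier_mat] Bt by simp
    moreover have "((1 - z) \<cdot>\<^sub>m 1\<^sub>m r) * ((- z) \<cdot>\<^sub>m Bt) = (1 - z) \<cdot>\<^sub>m ((- z) \<cdot>\<^sub>m Bt)"
      using mult_smult_assoc_mat[OF one_carrier_mat smult_carrier_mat[OF Bt]] Bt by simp
    ultimately show ?thesis using Bt by (intro eq_matI) (auto simp: algebra_simps)
  qed
  ultimately have GR: "G * R = four_block_mat (Phi_eval p k Ph z) A (0\<^sub>m r p) ((1 - z) \<cdot>\<^sub>m 1\<^sub>m r)"
    unfolding G_def R_def using Psi A Bt by (subst mult_four_block_mat) auto
  have "det G * det R = det (Phi_eval p k Ph z) * (1 - z)^r"
    unfolding det_mult[OF GC RC, symmetric] GR using A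
    by (subst det_four_block_mat_lower_left_zero[of _ p _ r]) auto
  moreover have "det R = (1 - z)^p"
    unfolding R_def using Bt by (subst det_four_block_mat_upper_right_zero[of _ p _ r]) auto
  ultimately show ?thesis unfolding G_def by simp
qed

lemma poly_det_map_mat: "poly (det M) z = det (map_mat (\<lambda>q. poly q z) M)"
  using comm_ring_hom.hom_det[OF poly_hom.comm_ring_hom_axioms[of z], of M] by simp

text \<open>Since \<open>\<Phi>(1) = -A B\<^sup>T\<close>, the factor \<open>(1 - z)\<^sup>p\<^sup>-\<^sup>r\<close> of \<open>det \<Phi>(z)\<close> splits off, and the cofactor at
  \<open>z = 1\<close> is the determinant of the bordered matrix.\<close>

lemma det_Phi_eval_factor:
  fixes Ph :: "nat \<Rightarrow> 'a::field_char_0 mat"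
  assumes A: "A \<in> carrier_mat p r" and Bt: "Bt \<in> carrier_mat r p"
    and AB1: "A * Bt = - Phi_eval p k Ph 1" and rp: "r \<le> p"
  obtains G where "\<And>z. det (Phi_eval p k Ph z) = (1 - z)^(p - r) * poly G z"
    and "poly G 1 = det (four_block_mat (Psi_eval p k Ph 1) A Bt (0\<^sub>m r r))"
proof -
  define eval where "eval z = map_mat (\<lambda>q. poly q z)" for z :: 'a
  define PhiP where "PhiP = mat p p (\<lambda>(a,b). [:Ph 0 $$ (a,b):] - (\<Sum>i\<in>{1..k}. monom (Ph i $$ (a,b)) i))"
  define GP where "GP = four_block_mat
    (mat p p (\<lambda>(a,b). [:Ph 0 $$ (a,b):] - (\<Sum>j\<in>{1..k-1}. monom (Gamma_gen p k Ph j $$ (a,b)) j)))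
    (map_mat (\<lambda>c. [:c:]) A) (map_mat (\<lambda>c. monom c 1) Bt) (mat r r (\<lambda>(i,j). if i = j then [:1,-1:] else 0))"
  have evPhi: "det (Phi_eval p k Ph z) = poly (det PhiP) z" for z
  proof -
    have "eval z PhiP = Phi_eval p k Ph z"
      unfolding eval_def PhiP_def Phi_eval_def by (rule eq_matI) (auto simp: poly_sum poly_monom)
    then show ?thesis unfolding poly_det_map_mat eval_def by simp
  qed
  have evG: "poly (det GP) z = det (four_block_mat (Psi_eval p k Ph z) A (z \<cdot>\<^sub>m Bt) ((1 - z) \<cdot>\<^sub>m 1\<^sub>m r))" for z
  proof -
    have "eval z GP = four_block_mat (Psi_eval p k Ph z) A (z \<cdot>\<^sub>m Bt) ((1 - z) \<cdot>\<^sub>m 1\<^sub>m r)"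
      unfolding eval_def GP_def using A Bt
      by (subst map_four_block_mat) (auto intro!: eq_matI cong_four_block_mat simp: Psi_eval_def poly_sum poly_monom)
    then show ?thesis unfolding poly_det_map_mat eval_def by simp
  qed
  have "poly (det GP * [:1, -1:]^p) = poly (det PhiP * [:1, -1:]^r)"
    using det_bordered_mult_power[OF A Bt AB1] by (auto simp: evG evPhi[symmetric] poly_power)
  then have "(det GP * [:1, -1:]^(p - r)) * [:1, -1:]^r = det PhiP * [:1, -1:]^r"
    using rp by (simp add: poly_eq_poly_eq_iff mult.assoc power_add[symmetric])
  then have fac: "det PhiP = det GP * [:1, -1:]^(p - r)" by simp
  show ?thesis
  proof
    show "det (Phi_eval p k Ph z) = (1 - z)^(p - r) * poly (det GP) z" for z
      unfolding evPhi fac by (simp add: poly_power)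
    have "four_block_mat (Psi_eval p k Ph 1) A (1 \<cdot>\<^sub>m Bt) ((1 - 1) \<cdot>\<^sub>m 1\<^sub>m r)
        = four_block_mat (Psi_eval p k Ph 1) A Bt (0\<^sub>m r r)"
      by (intro cong_four_block_mat refl) (auto intro!: eq_matI)
    then show "poly (det GP) 1 = det (four_block_mat (Psi_eval p k Ph 1) A Bt (0\<^sub>m r r))"
      unfolding evG by simp
  qed
qed

section \<open>Eigenvalues of the companion matrix\<close>

lemma smult_mat_mult_vec:
  assumes "M \<in> carrier_mat n m" "x \<in> carrier_vec m"
  shows "(c \<cdot>\<^sub>m M) *\<^sub>v x = c \<cdot>\<^sub>v (M *\<^sub>v x)"
  by (rule eq_vecI) (use assms in \<open>auto simp: scalar_prod_def sum_distrib_left algebra_simps\<close>)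

lemma Phi_eval_mult_vec_eigen:
  fixes z \<mu> :: "'a::field"
  assumes A: "A \<in> carrier_mat p r" and Bt: "Bt \<in> carrier_mat r p"
    and a: "a \<in> carrier_vec r" and x: "x \<in> carrier_vec p"
    and AB1: "A * Bt = - Phi_eval p k Ph 1" and z: "z * \<mu> = 1"
    and Psi: "Psi_eval p k Ph z *\<^sub>v x = A *\<^sub>v a" and Btx: "Bt *\<^sub>v x = (\<mu> - 1) \<cdot>\<^sub>v a"
  shows "Phi_eval p k Ph z *\<^sub>v x = 0\<^sub>v p"
proof -
  have "Phi_eval p k Ph 1 *\<^sub>v x = - ((\<mu> - 1) \<cdot>\<^sub>v (A *\<^sub>v a))"
  proof -
    have "Phi_eval p k Ph 1 = - (A * Bt)" using AB1 by simp
    then have "Phi_eval p k Ph 1 *\<^sub>v x = - ((A * Bt) *\<^sub>v x)" using A Bt x by simp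
    also have "\<dots> = - (A *\<^sub>v (Bt *\<^sub>v x))" using A Bt x by (simp add: assoc_mult_mat_vec)
    finally have "Phi_eval p k Ph 1 *\<^sub>v x = - (A *\<^sub>v (Bt *\<^sub>v x))" .
    then show ?thesis unfolding Btx mult_mat_vec[OF A a] .
  qed
  note Psi_C = var_carrier_mat(3)[of p k Ph z] and Phi_C = var_carrier_mat(2)[of p k Ph 1]
  have "Phi_eval p k Ph z *\<^sub>v x = ((1 - z) \<cdot>\<^sub>m Psi_eval p k Ph z) *\<^sub>v x + (z \<cdot>\<^sub>m Phi_eval p k Ph 1) *\<^sub>v x"
    by (subst Phi_eval_split) (rule add_mult_distrib_mat_vec[OF smult_carrier_mat[OF Psi_C] smult_carrier_mat[OF Phi_C] x])
  also have "\<dots> = (1 - z) \<cdot>\<^sub>v (A *\<^sub>v a) + z \<cdot>\<^sub>v (- ((\<mu> - 1) \<cdot>\<^sub>v (A *\<^sub>v a)))"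
    unfolding smult_mat_mult_vec[OF Psi_C x] smult_mat_mult_vec[OF Phi_C x] Psi \<open>Phi_eval p k Ph 1 *\<^sub>v x = _\<close> ..
  also have "\<dots> = 0\<^sub>v p"
  proof (rule eq_vecI)
    fix s assume "s < dim_vec (0\<^sub>v p)"
    then have "s < p" by simp
    moreover have "(1 - z) * c + z * (- ((\<mu> - 1) * c)) = c * (1 - z * \<mu>)" for c
      by (simp add: algebra_simps)
    ultimately show "((1 - z) \<cdot>\<^sub>v (A *\<^sub>v a) + z \<cdot>\<^sub>v (- ((\<mu> - 1) \<cdot>\<^sub>v (A *\<^sub>v a)))) $ s = 0\<^sub>v p $ s"
      using A z by simp
  qed (use A in simp)
  finally show ?thesis .
qed

lemma det_bordered_eq_0:
  fixes a :: "'a::field vec"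
  assumes A: "A \<in> carrier_mat p r" and Bt: "Bt \<in> carrier_mat r p"
    and a: "a \<in> carrier_vec r" and x: "x \<in> carrier_vec p" and nonzero: "x \<noteq> 0\<^sub>v p \<or> a \<noteq> 0\<^sub>v r"
    and Psi: "Psi_eval p k Ph 1 *\<^sub>v x = A *\<^sub>v a" and Btx: "Bt *\<^sub>v x = 0\<^sub>v r"
  shows "det (four_block_mat (Psi_eval p k Ph 1) A Bt (0\<^sub>m r r)) = 0"
proof -
  have a': "- a \<in> carrier_vec r" using a by simp
  have "Psi_eval p k Ph 1 *\<^sub>v x + A *\<^sub>v (- a) = 0\<^sub>v p"
    unfolding Psi using A a by (intro eq_vecI) (auto simp: scalar_prod_uminus_right)
  then have "four_block_mat (Psi_eval p k Ph 1) A Bt (0\<^sub>m r r) *\<^sub>v (x @\<^sub>v - a) = 0\<^sub>v (p + r)"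
    using four_block_mat_mult_vec[OF var_carrier_mat(3) A Bt zero_carrier_mat x a'] Btx a
    by (auto intro!: eq_vecI)
  moreover have "x @\<^sub>v - a \<noteq> 0\<^sub>v (p + r)"
  proof
    assume "x @\<^sub>v - a = 0\<^sub>v (p + r)"
    also have "0\<^sub>v (p + r) = 0\<^sub>v p @\<^sub>v (0\<^sub>v r :: 'a vec)" by (intro eq_vecI) auto
    finally have "x = 0\<^sub>v p" "- a = 0\<^sub>v r" using append_vec_eq[OF x zero_carrier_vec] by auto
    then show False using nonzero a by (simp add: uminus_zero_vec_eq)
  qed
  moreover have "four_block_mat (Psi_eval p k Ph 1) A Bt (0\<^sub>m r r) \<in> carrier_mat (p + r) (p + r)"
    by (intro four_block_carrier_mat var_carrier_mat(3) A Bt zero_carrier_mat)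
  ultimately show ?thesis
    using det_0_iff_vec_prod_zero append_carrier_vec[OF x a'] by blast
qed

lemma companion_eigenvector_reduction:
  fixes Ph :: "nat \<Rightarrow> 'a::field mat"
  assumes k: "k \<ge> 1" and P0: "Ph 0 \<in> carrier_mat p p"
    and A: "A \<in> carrier_mat p r" and Bt: "Bt \<in> carrier_mat r p" and P0i: "P0i \<in> carrier_mat p p"
    and inv: "Ph 0 * P0i = 1\<^sub>m p"
    and ev: "eigenvalue (companion p k r Ph A Bt P0i) \<mu>" and \<mu>: "\<mu> \<noteq> 0"
  obtains x a where "x \<in> carrier_vec p" "a \<in> carrier_vec r" "x \<noteq> 0\<^sub>v p \<or> a \<noteq> 0\<^sub>v r"
    "Bt *\<^sub>v x = (\<mu> - 1) \<cdot>\<^sub>v a" "Psi_eval p k Ph (inverse \<mu>) *\<^sub>v x = A *\<^sub>v a"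
proof -
  define n where "n = p*(k-1)"
  have "dim_row (companion p k r Ph A Bt P0i) = r + n"
    unfolding n_def by (rule carrier_matD(1)[OF companion_carrier_mat[OF A Bt P0i, where k=k and Ph=Ph]])
  then obtain v where v: "v \<in> carrier_vec (r + n)" "v \<noteq> 0\<^sub>v (r + n)"
    "companion p k r Ph A Bt P0i *\<^sub>v v = \<mu> \<cdot>\<^sub>v v"
    using ev unfolding eigenvalue_def eigenvector_def by auto
  define a where "a = vec_first v r"
  define w where "w = vec_last v n"
  have a: "a \<in> carrier_vec r" and w: "w \<in> carrier_vec (p*(k-1))" unfolding a_def w_def n_def by auto
  have vaw: "v = a @\<^sub>v w" unfolding a_def w_def using vec_first_last_append[OF v(1)] by simp
  define x where "x = P0i *\<^sub>v (A *\<^sub>v a + transpose_mat (embed_mat p k) *\<^sub>v w)"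
  have ET: "transpose_mat (embed_mat p k) \<in> carrier_mat p (p*(k-1))"
    using var_carrier_mat(6) by (simp only: transpose_carrier_mat)
  have y: "A *\<^sub>v a + transpose_mat (embed_mat p k) *\<^sub>v w \<in> carrier_vec p"
    by (intro add_carrier_vec mult_mat_vec_carrier[OF A a] mult_mat_vec_carrier[OF ET w])
  have x: "x \<in> carrier_vec p" unfolding x_def by (rule mult_mat_vec_carrier[OF P0i y])
  note eqs = companion_eigen_equations[OF A Bt P0i a w x_def v(3)[unfolded vaw]]
  have P0x: "(Ph 0 *\<^sub>v x) $ s = (A *\<^sub>v a) $ s + block_entry p k w 1 s" if s: "s < p" for s
  proof -
    have "Ph 0 *\<^sub>v x = A *\<^sub>v a + transpose_mat (embed_mat p k) *\<^sub>v w"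
      unfolding x_def assoc_mult_mat_vec[OF P0 P0i y, symmetric] inv using y by simp
    then show ?thesis using s A a embed_mat_transpose_mult_vec[OF w k s] by simp
  qed
  have z\<mu>: "inverse \<mu> * \<mu> = 1" using \<mu> by simp
  have Psi: "Psi_eval p k Ph (inverse \<mu>) *\<^sub>v x = A *\<^sub>v a"
    using index_Psi_eval_mult_vec_eigen[OF k P0 x _ z\<mu> eqs(2)] P0x A by (intro eq_vecI) auto
  have nonzero: "x \<noteq> 0\<^sub>v p \<or> a \<noteq> 0\<^sub>v r"
  proof (rule ccontr)
    assume "\<not> ?thesis"
    then have x0: "x = 0\<^sub>v p" and a0: "a = 0\<^sub>v r" by auto
    have "\<mu> * block_entry p k w j s = block_entry p k w (Suc j) s" if "1 \<le> j" "j < k" "s < p" for j s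
      using eqs(2)[OF that] that by (simp add: x0 scalar_prod_def)
    then have "w = 0\<^sub>v (p*(k-1))" by (rule block_recursion_zero[OF w \<mu>])
    with v(2) a0 show False unfolding vaw n_def by (auto simp: append_vec_eq)
  qed
  with x a eqs(1) Psi that show ?thesis by blast
qed

lemma companion_eigenvalue_norm_less_1:
  fixes Ph :: "nat \<Rightarrow> complex mat" and A Bt P0i :: "complex mat"
  assumes k: "k \<ge> 1" and P0: "Ph 0 \<in> carrier_mat p p"
    and A: "A \<in> carrier_mat p r" and Bt: "Bt \<in> carrier_mat r p" and P0i: "P0i \<in> carrier_mat p p"
    and inv: "Ph 0 * P0i = 1\<^sub>m p" and AB1: "A * Bt = - Phi_eval p k Ph 1"
    and roots: "\<And>z. det (Phi_eval p k Ph z) = 0 \<Longrightarrow> z = 1 \<or> 1 < cmod z"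
    and bordered: "det (four_block_mat (Psi_eval p k Ph 1) A Bt (0\<^sub>m r r)) \<noteq> 0"
    and ev: "eigenvalue (companion p k r Ph A Bt P0i) \<mu>"
  shows "cmod \<mu> < 1"
proof (cases "\<mu> = 0")
  case False
  then obtain x a where x: "x \<in> carrier_vec p" and a: "a \<in> carrier_vec r"
    and nonzero: "x \<noteq> 0\<^sub>v p \<or> a \<noteq> 0\<^sub>v r" and Btx: "Bt *\<^sub>v x = (\<mu> - 1) \<cdot>\<^sub>v a"
    and Psi: "Psi_eval p k Ph (inverse \<mu>) *\<^sub>v x = A *\<^sub>v a"
    using companion_eigenvector_reduction[OF k P0 A Bt P0i inv ev] by blast
  define z where "z = inverse \<mu>"
  have z\<mu>: "z * \<mu> = 1" unfolding z_def using False by simp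
  show ?thesis
  proof (cases "\<mu> = 1")
    case True
    have "Bt *\<^sub>v x = 0\<^sub>v r" unfolding Btx True using a by (intro eq_vecI) auto
    moreover have "Psi_eval p k Ph 1 *\<^sub>v x = A *\<^sub>v a" using Psi True by simp
    ultimately have "det (four_block_mat (Psi_eval p k Ph 1) A Bt (0\<^sub>m r r)) = 0"
      using det_bordered_eq_0[OF A Bt a x nonzero] by blast
    with bordered show ?thesis by simp
  next
    case \<mu>1: False
    have "x \<noteq> 0\<^sub>v p"
    proof
      assume x0: "x = 0\<^sub>v p"
      moreover have "Bt *\<^sub>v 0\<^sub>v p = 0\<^sub>v r" using Bt by (intro eq_vecI) (auto simp: scalar_prod_def)
      ultimately have "(\<mu> - 1) \<cdot>\<^sub>v a = 0\<^sub>v r" using Btx by simp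
      have "a = 0\<^sub>v r"
      proof (rule eq_vecI)
        fix i assume "i < dim_vec (0\<^sub>v r)"
        then have "(\<mu> - 1) * a $ i = 0" using arg_cong[OF \<open>(\<mu> - 1) \<cdot>\<^sub>v a = 0\<^sub>v r\<close>, of "\<lambda>v. v $ i"] a by simp
        then show "a $ i = 0\<^sub>v r $ i" using \<mu>1 \<open>i < dim_vec (0\<^sub>v r)\<close> by simp
      qed (use a in simp)
      with x0 nonzero show False by simp
    qed
    moreover have "Phi_eval p k Ph z *\<^sub>v x = 0\<^sub>v p"
      by (rule Phi_eval_mult_vec_eigen[OF A Bt a x AB1 z\<mu> Psi[folded z_def] Btx])
    ultimately have "det (Phi_eval p k Ph z) = 0"
      using det_0_iff_vec_prod_zero[OF var_carrier_mat(2)] x by blast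
    moreover have "z \<noteq> 1" using \<mu>1 unfolding z_def by (metis inverse_1 inverse_inverse_eq)
    ultimately have "1 < cmod z" using roots by blast
    moreover have "cmod \<mu> = inverse (cmod z)" unfolding z_def by (simp add: norm_inverse)
    ultimately show ?thesis by (simp add: inverse_less_1_iff)
  qed
qed simp

section \<open>Complexification and the spectral radius\<close>

lemma PhiAt_eq_Phi_eval: "PhiAt p k \<Phi> x = Phi_eval p k \<Phi> x"
  unfolding PhiAt_def Phi_eval_def ..

lemma Gamma_eq_Gamma_gen: "Gamma p k \<Phi> j = Gamma_gen p k \<Phi> j"
  unfolding Gamma_def Gamma_gen_def ..

lemma
  assumes dims: "\<forall>i\<le>k. \<Phi> i \<in> carrier_mat p p"
  shows map_Gamma_gen: "map_mat complex_of_real (Gamma_gen p k \<Phi> j) = Gamma_gen p k (\<lambda>i. map_mat of_real (\<Phi> i)) j"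
    and map_Phi_eval: "map_mat complex_of_real (Phi_eval p k \<Phi> x) = Phi_eval p k (\<lambda>i. map_mat of_real (\<Phi> i)) (of_real x)"
proof -
  have "dim_row (\<Phi> i) = p" "dim_col (\<Phi> i) = p" if "i \<le> k" for i
    using dims that by auto
  then show "map_mat complex_of_real (Gamma_gen p k \<Phi> j) = Gamma_gen p k (\<lambda>i. map_mat of_real (\<Phi> i)) j"
    and "map_mat complex_of_real (Phi_eval p k \<Phi> x) = Phi_eval p k (\<lambda>i. map_mat of_real (\<Phi> i)) (of_real x)"
    by (auto intro!: eq_matI sum.cong simp: Gamma_gen_def Phi_eval_def)
qed

lemma map_Gamma_stack:
  assumes dims: "\<forall>i\<le>k. \<Phi> i \<in> carrier_mat p p"
  shows "map_mat complex_of_real (Gamma_stack p k \<Phi>) = Gamma_stack p k (\<lambda>i. map_mat of_real (\<Phi> i))"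
proof (rule eq_matI)
  fix a b assume "a < dim_row (Gamma_stack p k (\<lambda>i. map_mat of_real (\<Phi> i)))"
    "b < dim_col (Gamma_stack p k (\<lambda>i. map_mat of_real (\<Phi> i)))"
  then have ab: "a < p*(k-1)" "b < p" by auto
  then have "a mod p < p" by (cases p) auto
  then have "complex_of_real (Gamma_gen p k \<Phi> (a div p + 1) $$ (a mod p, b))
      = map_mat complex_of_real (Gamma_gen p k \<Phi> (a div p + 1)) $$ (a mod p, b)"
    using ab by simp
  also have "\<dots> = Gamma_gen p k (\<lambda>i. map_mat of_real (\<Phi> i)) (a div p + 1) $$ (a mod p, b)"
    unfolding map_Gamma_gen[OF dims] ..
  finally show "map_mat complex_of_real (Gamma_stack p k \<Phi>) $$ (a,b) = Gamma_stack p k (\<lambda>i. map_mat of_real (\<Phi> i)) $$ (a,b)"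
    using ab by (simp add: Gamma_stack_def)
qed auto

lemma map_companion:
  fixes \<Phi> :: "nat \<Rightarrow> real mat"
  assumes dims: "\<forall>i\<le>k. \<Phi> i \<in> carrier_mat p p" and A: "A \<in> carrier_mat p r"
    and Bt: "Bt \<in> carrier_mat r p" and P0i: "P0i \<in> carrier_mat p p"
  shows "map_mat complex_of_real (companion p k r \<Phi> A Bt P0i)
    = companion p k r (\<lambda>i. map_mat of_real (\<Phi> i)) (map_mat of_real A) (map_mat of_real Bt) (map_mat of_real P0i)"
proof -
  let ?c = "map_mat complex_of_real"
  note GS = var_carrier_mat(4)[of p k \<Phi>] and D = var_carrier_mat(5)[of p k]
    and Al = alpha_block_carrier_mat[OF A, of k] and Be = beta_block_carrier_mat[OF Bt P0i, of k \<Phi>]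
  have "?c (beta_block p k r \<Phi> Bt P0i)
      = four_block_mat (?c (Bt * P0i)) (?c (0\<^sub>m r (p*(k-1)))) (?c (Gamma_stack p k \<Phi> * P0i)) (?c (shift_mat p k))"
    unfolding beta_block_def by (rule map_four_block_mat) (use Bt P0i GS D in auto)
  also have "\<dots> = beta_block p k r (\<lambda>i. ?c (\<Phi> i)) (?c Bt) (?c P0i)"
    unfolding beta_block_def of_real_hom.mat_hom_mult[OF Bt P0i] of_real_hom.mat_hom_mult[OF GS P0i]
      map_Gamma_stack[OF dims]
    by (intro cong_four_block_mat refl) (auto intro!: eq_matI simp: shift_mat_def)
  finally have beta: "?c (beta_block p k r \<Phi> Bt P0i) = beta_block p k r (\<lambda>i. ?c (\<Phi> i)) (?c Bt) (?c P0i)" .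
  have "?c (alpha_block p k r A)
      = four_block_mat (?c A) (?c (transpose_mat (embed_mat p k))) (?c (0\<^sub>m (p*(k-1)) r)) (?c (1\<^sub>m (p*(k-1))))"
    unfolding alpha_block_def by (rule map_four_block_mat) (use A in auto)
  also have "\<dots> = alpha_block p k r (?c A)"
    unfolding alpha_block_def of_real_hom.mat_hom_one
    by (intro cong_four_block_mat refl) (auto intro!: eq_matI simp: embed_mat_def)
  finally have alpha: "?c (alpha_block p k r A) = alpha_block p k r (?c A)" .
  have "?c (companion p k r \<Phi> A Bt P0i) = ?c (1\<^sub>m (r + p*(k-1))) + ?c (beta_block p k r \<Phi> Bt P0i * alpha_block p k r A)"
    unfolding companion_def using Be Al by (intro eq_matI) auto
  also have "\<dots> = companion p k r (\<lambda>i. ?c (\<Phi> i)) (?c A) (?c Bt) (?c P0i)"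
    unfolding companion_def of_real_hom.mat_hom_one of_real_hom.mat_hom_mult[OF Be Al] beta alpha ..
  finally show ?thesis .
qed

lemma comm_ring_hom_poly_map_of_real: "comm_ring_hom (\<lambda>q. poly (map_poly complex_of_real q) z)"
proof -
  interpret m: map_poly_comm_ring_hom "complex_of_real" ..
  show ?thesis by unfold_locales (simp_all add: m.hom_add m.hom_mult)
qed

lemma poly_detPhi:
  assumes dims: "\<forall>i\<le>k. \<Phi> i \<in> carrier_mat p p"
  shows "poly (detPhi p k \<Phi>) z = det (Phi_eval p k (\<lambda>i. map_mat complex_of_real (\<Phi> i)) z)"
proof -
  let ?h = "\<lambda>q. poly (map_poly complex_of_real q) z"
  interpret h: comm_ring_hom ?h by (rule comm_ring_hom_poly_map_of_real)
  have d: "dim_row (\<Phi> i) = p" "dim_col (\<Phi> i) = p" if "i \<le> k" for i using dims that by auto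
  have "map_mat ?h (PhiPoly p k \<Phi>) = Phi_eval p k (\<lambda>i. map_mat complex_of_real (\<Phi> i)) z"
  proof (rule eq_matI)
    fix a b assume "a < dim_row (Phi_eval p k (\<lambda>i. map_mat complex_of_real (\<Phi> i)) z)"
      "b < dim_col (Phi_eval p k (\<lambda>i. map_mat complex_of_real (\<Phi> i)) z)"
    then have ab: "a < p" "b < p" by auto
    have "map_mat ?h (PhiPoly p k \<Phi>) $$ (a,b) = ?h ([:\<Phi> 0 $$ (a,b):] - (\<Sum>i\<in>{1..k}. monom (\<Phi> i $$ (a,b)) i))"
      using ab unfolding PhiPoly_def by simp
    also have "\<dots> = of_real (\<Phi> 0 $$ (a,b)) - (\<Sum>i\<in>{1..k}. of_real (\<Phi> i $$ (a,b)) * z^i)"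
      by (simp add: h.hom_minus h.hom_sum map_poly_monom poly_monom map_poly_simps)
    also have "\<dots> = Phi_eval p k (\<lambda>i. map_mat complex_of_real (\<Phi> i)) z $$ (a,b)"
      using ab d by (simp add: Phi_eval_def)
    finally show "map_mat ?h (PhiPoly p k \<Phi>) $$ (a,b) = Phi_eval p k (\<lambda>i. map_mat complex_of_real (\<Phi> i)) z $$ (a,b)" .
  qed (auto simp: PhiPoly_def)
  then show ?thesis unfolding detPhi_def h.hom_det[symmetric] by simp
qed

lemma poly_cofactor_at_one_nonzero:
  fixes G :: "'a::idom poly"
  assumes f: "f = [:1, -1:]^m * G" and f0: "f \<noteq> 0" and ord: "Polynomial.order 1 f = m"
  shows "poly G 1 \<noteq> 0"
proof
  assume "poly G 1 = 0"
  then have "[:-1, 1:] dvd G" by (simp add: poly_eq_0_iff_dvd)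
  moreover have "[:-1, 1::'a:]^m dvd [:1, -1:]^m"
    by (rule dvd_power_same) (rule dvdI[of _ _ "[:-1:]"], simp)
  ultimately have "[:-1, 1:]^(Suc m) dvd f" unfolding f power_Suc2 by (rule mult_dvd_mono[rotated])
  with order_2[OF f0, of 1] ord show False by simp
qed

lemma srad_less_1_if_eigenvalues:
  assumes M: "M \<in> carrier_mat n n"
    and ev: "\<And>\<mu>. eigenvalue (map_mat complex_of_real M) \<mu> \<Longrightarrow> cmod \<mu> < 1"
  shows "srad M < 1"
proof (cases "n = 0")
  case False
  have C: "map_mat complex_of_real M \<in> carrier_mat n n" using M by auto
  from spectral_radius_mem_max(1)[OF C] False obtain \<mu> where
    "eigenvalue (map_mat complex_of_real M) \<mu>" "spectral_radius (map_mat complex_of_real M) = cmod \<mu>"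
    unfolding spectrum_def by auto
  then show ?thesis using ev M False unfolding srad_def by auto
qed (use M in \<open>simp add: srad_def\<close>)

lemma srad_companion_less_1:
  fixes \<Phi> :: "nat \<Rightarrow> real mat"
  assumes k: "k \<ge> 1" and rp: "r \<le> p"
    and dims: "\<forall>i\<le>k. \<Phi> i \<in> carrier_mat p p"
    and A: "A \<in> carrier_mat p r" and Bt: "Bt \<in> carrier_mat r p" and P0i: "P0i \<in> carrier_mat p p"
    and inv: "\<Phi> 0 * P0i = 1\<^sub>m p" and AB1: "A * Bt = - Phi_eval p k \<Phi> 1"
    and LIN3a: "Polynomial.order 1 (detPhi p k \<Phi>) = p - r"
    and LIN3b: "\<forall>z. poly (detPhi p k \<Phi>) z = 0 \<longrightarrow> z = 1 \<or> 1 < cmod z"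
  shows "srad (companion p k r \<Phi> A Bt P0i) < 1"
proof (rule srad_less_1_if_eigenvalues[OF companion_carrier_mat[OF A Bt P0i]])
  let ?c = "map_mat complex_of_real"
  define Ph where "Ph i = ?c (\<Phi> i)" for i
  have P0: "Ph 0 \<in> carrier_mat p p" using dims unfolding Ph_def by auto
  have "\<Phi> 0 \<in> carrier_mat p p" using dims by simp
  then have "Ph 0 * ?c P0i = ?c (\<Phi> 0 * P0i)"
    unfolding Ph_def by (rule of_real_hom.mat_hom_mult[OF _ P0i, symmetric])
  then have invc: "Ph 0 * ?c P0i = 1\<^sub>m p" unfolding inv of_real_hom.mat_hom_one .
  have AB1c: "?c A * ?c Bt = - Phi_eval p k Ph 1"
  proof -
    have "?c A * ?c Bt = ?c (- Phi_eval p k \<Phi> 1)" unfolding AB1[symmetric] of_real_hom.mat_hom_mult[OF A Bt] ..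
    also have "\<dots> = - ?c (Phi_eval p k \<Phi> 1)" by (intro eq_matI) auto
    finally show ?thesis unfolding Ph_def map_Phi_eval[OF dims] by simp
  qed
  have poly_det: "poly (detPhi p k \<Phi>) z = det (Phi_eval p k Ph z)" for z
    unfolding Ph_def by (rule poly_detPhi[OF dims])
  obtain G where G: "\<And>z. det (Phi_eval p k Ph z) = (1 - z)^(p - r) * poly G z"
    and G1: "poly G 1 = det (four_block_mat (Psi_eval p k Ph 1) (?c A) (?c Bt) (0\<^sub>m r r))"
    using det_Phi_eval_factor[OF _ _ AB1c rp] A Bt by auto
  have "detPhi p k \<Phi> = [:1, -1:]^(p - r) * G"
    by (rule poly_ext) (simp add: poly_det G poly_power)
  moreover have "detPhi p k \<Phi> \<noteq> 0"
    using LIN3b by (metis norm_zero not_one_less_zero poly_0 zero_neq_one)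
  ultimately have "poly G 1 \<noteq> 0" using LIN3a by (rule poly_cofactor_at_one_nonzero)
  moreover have "z = 1 \<or> 1 < cmod z" if "det (Phi_eval p k Ph z) = 0" for z
    using LIN3b that poly_det by auto
  ultimately show "cmod \<mu> < 1" if "eigenvalue (?c (companion p k r \<Phi> A Bt P0i)) \<mu>" for \<mu>
    using companion_eigenvalue_norm_less_1[OF k P0 _ _ _ invc AB1c] that A Bt P0i G1
    unfolding map_companion[OF dims A Bt P0i] Ph_def by auto
qed

lemma index_mat_mult_vec:
  assumes "x \<in> carrier_vec m" "s < n"
  shows "(mat n m f *\<^sub>v x) $ s = (\<Sum>b<m. f (s,b) * x $ b)"
  using assms by (simp add: scalar_prod_def lessThan_atLeast0)

lemma gfun_linear:
  assumes dims: "\<forall>i\<le>k. \<Phi> i \<in> carrier_mat p p" and z: "z \<in> carrier_vec p"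
  shows "gfun p k (\<lambda>i z. \<Phi> i *\<^sub>v z) j z = Gamma p k \<Phi> j *\<^sub>v z"
proof (rule eq_vecI)
  fix l assume "l < dim_vec (Gamma p k \<Phi> j *\<^sub>v z)"
  then have l: "l < p" by (simp add: Gamma_def)
  have "gfun p k (\<lambda>i z. \<Phi> i *\<^sub>v z) j z $ l = - (\<Sum>i\<in>{j+1..k}. \<Sum>b<p. \<Phi> i $$ (l,b) * z $ b)"
    unfolding gfun_def using l dims z by (simp add: index_mult_mat_vec_sum[of _ p p])
  also have "\<dots> = (\<Sum>b<p. (- (\<Sum>i\<in>{j+1..k}. \<Phi> i $$ (l,b))) * z $ b)"
    by (subst sum.swap) (simp add: sum_distrib_right sum_negf)
  also have "\<dots> = (Gamma p k \<Phi> j *\<^sub>v z) $ l"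
    unfolding Gamma_def using l z by (simp add: index_mat_mult_vec del: index_mult_mat_vec)
  finally show "gfun p k (\<lambda>i z. \<Phi> i *\<^sub>v z) j z $ l = (Gamma p k \<Phi> j *\<^sub>v z) $ l" .
qed (simp add: gfun_def Gamma_def)

lemma pifun_linear:
  assumes dims: "\<forall>i\<le>k. \<Phi> i \<in> carrier_mat p p" and z: "z \<in> carrier_vec p"
  shows "pifun p k (\<lambda>i z. \<Phi> i *\<^sub>v z) z = - (PhiAt p k \<Phi> 1 *\<^sub>v z)"
proof (rule eq_vecI)
  fix l assume "l < dim_vec (- (PhiAt p k \<Phi> 1 *\<^sub>v z))"
  then have l: "l < p" by (simp add: PhiAt_def)
  have "pifun p k (\<lambda>i z. \<Phi> i *\<^sub>v z) z $ l = - (\<Sum>b<p. \<Phi> 0 $$ (l,b) * z $ b) + (\<Sum>i\<in>{1..k}. \<Sum>b<p. \<Phi> i $$ (l,b) * z $ b)"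
    unfolding pifun_def using l dims z by (simp add: index_mult_mat_vec_sum[of _ p p])
  also have "\<dots> = - (\<Sum>b<p. (\<Phi> 0 $$ (l,b) - (\<Sum>i\<in>{1..k}. \<Phi> i $$ (l,b) * 1^i)) * z $ b)"
  proof -
    have "(\<Sum>b<p. (\<Phi> 0 $$ (l,b) - (\<Sum>i\<in>{1..k}. \<Phi> i $$ (l,b) * 1^i)) * z $ b)
        = (\<Sum>b<p. \<Phi> 0 $$ (l,b) * z $ b) - (\<Sum>b<p. \<Sum>i\<in>{1..k}. \<Phi> i $$ (l,b) * z $ b)"
      unfolding sum_subtractf[symmetric] by (intro sum.cong refl) (simp add: algebra_simps sum_distrib_left)
    also have "(\<Sum>b<p. \<Sum>i\<in>{1..k}. \<Phi> i $$ (l,b) * z $ b) = (\<Sum>i\<in>{1..k}. \<Sum>b<p. \<Phi> i $$ (l,b) * z $ b)"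
      by (rule sum.swap)
    finally show ?thesis by simp
  qed
  also have "\<dots> = (- (PhiAt p k \<Phi> 1 *\<^sub>v z)) $ l"
    unfolding PhiAt_def using l z by (simp add: index_mat_mult_vec del: index_mult_mat_vec)
  finally show "pifun p k (\<lambda>i z. \<Phi> i *\<^sub>v z) z $ l = (- (PhiAt p k \<Phi> 1 *\<^sub>v z)) $ l" .
qed (simp add: pifun_def PhiAt_def)

lemma psi_linear:
  assumes dims: "\<forall>i\<le>k. \<Phi> i \<in> carrier_mat p p" and z: "z \<in> carrier_vec p"
    and ap: "\<alpha>perp \<in> carrier_mat p q"
  shows "psi p k (\<lambda>i z. \<Phi> i *\<^sub>v z) \<alpha>perp z =
    (transpose_mat \<alpha>perp * mat p p (\<lambda>(a,b). \<Phi> 0 $$ (a,b) - (\<Sum>i\<in>{1..k-1}. Gamma p k \<Phi> i $$ (a,b)))) *\<^sub>v z"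
proof -
  let ?N = "mat p p (\<lambda>(a,b). \<Phi> 0 $$ (a,b) - (\<Sum>i\<in>{1..k-1}. Gamma p k \<Phi> i $$ (a,b)))"
  have "vec p (\<lambda>l. (\<Phi> 0 *\<^sub>v z) $ l - (\<Sum>i\<in>{1..k-1}. gfun p k (\<lambda>i z. \<Phi> i *\<^sub>v z) i z $ l)) = ?N *\<^sub>v z"
  proof (rule eq_vecI)
    fix l assume "l < dim_vec (?N *\<^sub>v z)"
    then have l: "l < p" by simp
    have G: "(Gamma p k \<Phi> i *\<^sub>v z) $ l = (\<Sum>b<p. Gamma p k \<Phi> i $$ (l,b) * z $ b)" for i
      using l z by (intro index_mult_mat_vec_sum[of _ p p]) (auto simp: Gamma_def)
    have "vec p (\<lambda>l. (\<Phi> 0 *\<^sub>v z) $ l - (\<Sum>i\<in>{1..k-1}. gfun p k (\<lambda>i z. \<Phi> i *\<^sub>v z) i z $ l)) $ l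
        = (\<Sum>b<p. \<Phi> 0 $$ (l,b) * z $ b) - (\<Sum>i\<in>{1..k-1}. \<Sum>b<p. Gamma p k \<Phi> i $$ (l,b) * z $ b)"
      using l dims z gfun_linear[OF dims z] G by (simp add: index_mult_mat_vec_sum[of _ p p])
    also have "\<dots> = (\<Sum>b<p. (\<Phi> 0 $$ (l,b) - (\<Sum>i\<in>{1..k-1}. Gamma p k \<Phi> i $$ (l,b))) * z $ b)"
    proof -
      have "(\<Sum>b<p. (\<Phi> 0 $$ (l,b) - (\<Sum>i\<in>{1..k-1}. Gamma p k \<Phi> i $$ (l,b))) * z $ b)
        = (\<Sum>b<p. \<Phi> 0 $$ (l,b) * z $ b) - (\<Sum>b<p. \<Sum>i\<in>{1..k-1}. Gamma p k \<Phi> i $$ (l,b) * z $ b)"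
        unfolding sum_subtractf[symmetric] by (intro sum.cong refl) (simp add: algebra_simps sum_distrib_left)
      also have "(\<Sum>b<p. \<Sum>i\<in>{1..k-1}. Gamma p k \<Phi> i $$ (l,b) * z $ b) = (\<Sum>i\<in>{1..k-1}. \<Sum>b<p. Gamma p k \<Phi> i $$ (l,b) * z $ b)"
        by (rule sum.swap)
      finally show ?thesis by simp
    qed
    also have "\<dots> = (?N *\<^sub>v z) $ l" using l z by (simp add: index_mat_mult_vec del: index_mult_mat_vec)
    finally show "vec p (\<lambda>l. (\<Phi> 0 *\<^sub>v z) $ l - (\<Sum>i\<in>{1..k-1}. gfun p k (\<lambda>i z. \<Phi> i *\<^sub>v z) i z $ l)) $ l = (?N *\<^sub>v z) $ l" .
  qed simp
  then show ?thesis unfolding psi_def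
    using assoc_mult_mat_vec[of "transpose_mat \<alpha>perp" q p ?N p z] ap z by simp
qed

lemma gbold_linear:
  assumes dims: "\<forall>i\<le>k. \<Phi> i \<in> carrier_mat p p" and u: "u \<in> carrier_vec p"
  shows "gbold p k (\<lambda>i z. \<Phi> i *\<^sub>v z) u = Gamma_stack p k \<Phi> *\<^sub>v u"
proof (rule eq_vecI)
  fix l assume "l < dim_vec (Gamma_stack p k \<Phi> *\<^sub>v u)"
  then have l: "l < p*(k-1)" by simp
  then have p: "p > 0" by (cases p) auto
  have "l div p < k - 1" using l p by (simp add: div_less_iff_less_mult mult.commute)
  then have j: "1 \<le> l div p + 1" "l div p + 1 < k" by auto
  have s: "l mod p < p" using p by simp
  have "l = (l div p + 1 - 1) * p + l mod p" by simp
  then have "(Gamma_stack p k \<Phi> *\<^sub>v u) $ l = (Gamma_gen p k \<Phi> (l div p + 1) *\<^sub>v u) $ (l mod p)"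
    using block_Gamma_stack_mult_vec[OF u j s] by metis
  then show "gbold p k (\<lambda>i z. \<Phi> i *\<^sub>v z) u $ l = (Gamma_stack p k \<Phi> *\<^sub>v u) $ l"
    unfolding gbold_def using l gfun_linear[OF dims u] by (simp add: Gamma_eq_Gamma_gen)
qed (simp add: gbold_def)

lemma invertible_mat_obtain_inverse:
  assumes P: "P \<in> carrier_mat n n" and inv: "invertible_mat P"
  obtains P' where "P' \<in> carrier_mat n n" "P * P' = 1\<^sub>m n" "P' * P = 1\<^sub>m n"
proof -
  from inv obtain B where B1: "P * B = 1\<^sub>m (dim_row P)" and B2: "B * P = 1\<^sub>m (dim_row B)"
    unfolding invertible_mat_def inverts_mat_def by auto
  have "dim_col B = n" using arg_cong[OF B1, of dim_col] P by simp
  moreover have "dim_row B = n" using arg_cong[OF B2, of dim_col] P by simp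
  ultimately show ?thesis using that[of B] B1 B2 P by auto
qed

lemma D0mat_mult_vec:
  assumes z1: "z1 \<in> carrier_vec p" and z2: "z2 \<in> carrier_vec (p*(k-1))"
  shows "D0mat p k r *\<^sub>v (z1 @\<^sub>v z2) = 0\<^sub>v r @\<^sub>v (shift_mat p k *\<^sub>v z2)"
proof -
  have "Dmat p k = shift_mat p k" unfolding Dmat_def shift_mat_def ..
  then have D: "Dmat p k \<in> carrier_mat (p*(k-1)) (p*(k-1))" using var_carrier_mat(5) by metis
  show ?thesis
    unfolding D0mat_def four_block_mat_mult_vec[OF zero_carrier_mat zero_carrier_mat zero_carrier_mat D z1 z2]
    unfolding \<open>Dmat p k = shift_mat p k\<close>
    using z1 z2 mult_mat_vec_carrier[OF var_carrier_mat(5) z2] by simp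
qed

lemma state_map_linear:
  fixes \<Phi> :: "nat \<Rightarrow> real mat"
  assumes k: "k \<ge> 1" and dims: "\<forall>i\<le>k. \<Phi> i \<in> carrier_mat p p"
    and Bt: "Bt \<in> carrier_mat r p" and P0i: "P0i \<in> carrier_mat p p"
    and inv1: "P0i * \<Phi> 0 = 1\<^sub>m p" and inv2: "\<Phi> 0 * P0i = 1\<^sub>m p"
    and zb: "zb \<in> carrier_vec (k*p)"
  shows "theta_bold p k (\<lambda>i z. \<Phi> i *\<^sub>v z) (\<lambda>z. Bt *\<^sub>v z)
      (the_inv_into (carrier_vec p) (\<lambda>z. \<Phi> 0 *\<^sub>v z) (vec_first zb p)) + D0mat p k r *\<^sub>v zb
    = beta_block p k r \<Phi> Bt P0i *\<^sub>v zb"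
proof -
  define n where "n = p*(k-1)"
  have kp: "k * p = p + n" unfolding n_def using k by (cases k) auto
  define z1 where "z1 = vec_first zb p"
  define z2 where "z2 = vec_last zb n"
  have z1: "z1 \<in> carrier_vec p" and z2: "z2 \<in> carrier_vec (p*(k-1))" unfolding z1_def z2_def n_def by auto
  have zb12: "zb = z1 @\<^sub>v z2" unfolding z1_def z2_def using zb kp vec_first_last_append[of zb p n] by simp
  define u where "u = P0i *\<^sub>v z1"
  have u: "u \<in> carrier_vec p" unfolding u_def using P0i z1 by simp
  have P0: "\<Phi> 0 \<in> carrier_mat p p" using dims by simp
  have "the_inv_into (carrier_vec p) (\<lambda>z. \<Phi> 0 *\<^sub>v z) z1 = u"
    unfolding u_def by (rule the_inv_into_mult_mat_vec[OF P0 P0i inv1 inv2 z1])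
  moreover have "theta_bold p k (\<lambda>i z. \<Phi> i *\<^sub>v z) (\<lambda>z. Bt *\<^sub>v z) u = (Bt *\<^sub>v u) @\<^sub>v (Gamma_stack p k \<Phi> *\<^sub>v u)"
    unfolding theta_bold_def using gbold_linear[OF dims u] by simp
  moreover have "beta_block p k r \<Phi> Bt P0i *\<^sub>v zb = (Bt *\<^sub>v u) @\<^sub>v (Gamma_stack p k \<Phi> *\<^sub>v u + shift_mat p k *\<^sub>v z2)"
    unfolding beta_block_def zb12 four_block_mat_mult_vec[OF mult_carrier_mat[OF Bt P0i] zero_carrier_mat
      mult_carrier_mat[OF var_carrier_mat(4) P0i] var_carrier_mat(5) z1 z2]
    using Bt P0i z1 z2 unfolding u_def
    by (simp add: assoc_mult_mat_vec[OF Bt P0i z1] assoc_mult_mat_vec[OF var_carrier_mat(4) P0i z1])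
  moreover have "((Bt *\<^sub>v u) @\<^sub>v (Gamma_stack p k \<Phi> *\<^sub>v u)) + (0\<^sub>v r @\<^sub>v (shift_mat p k *\<^sub>v z2))
      = (Bt *\<^sub>v u) @\<^sub>v (Gamma_stack p k \<Phi> *\<^sub>v u + shift_mat p k *\<^sub>v z2)"
    using append_vec_add[OF mult_mat_vec_carrier[OF Bt u] zero_carrier_vec
        mult_mat_vec_carrier[OF var_carrier_mat(4) u] mult_mat_vec_carrier[OF var_carrier_mat(5) z2]]
      mult_mat_vec_carrier[OF Bt u] by simp
  ultimately show ?thesis unfolding z1_def[symmetric] D0mat_mult_vec[OF z1 z2, folded zb12] by simp
qed

lemma companion_eq_alpha_bold:
  "1\<^sub>m (p*(k-1) + r) + transpose_mat (transpose_mat (beta_block p k r \<Phi> Bt P0i)) * alpha_bold p k r A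
    = companion p k r \<Phi> A Bt P0i"
  unfolding companion_def alpha_bold_def alpha_block_def Emat_def embed_mat_def by (simp add: add.commute)

lemma state_map_diff_linear:
  fixes \<Phi> :: "nat \<Rightarrow> real mat"
  assumes k: "k \<ge> 1" and dims: "\<forall>i\<le>k. \<Phi> i \<in> carrier_mat p p"
    and Bt: "Bt \<in> carrier_mat r p" and P0i: "P0i \<in> carrier_mat p p"
    and inv1: "P0i * \<Phi> 0 = 1\<^sub>m p" and inv2: "\<Phi> 0 * P0i = 1\<^sub>m p"
    and zb: "zb \<in> carrier_vec (k*p)" and zb': "zb' \<in> carrier_vec (k*p)"
  shows "(theta_bold p k (\<lambda>i z. \<Phi> i *\<^sub>v z) (\<lambda>z. Bt *\<^sub>v z)
        (the_inv_into (carrier_vec p) (\<lambda>z. \<Phi> 0 *\<^sub>v z) (vec_first zb p)) + D0mat p k r *\<^sub>v zb)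
      - (theta_bold p k (\<lambda>i z. \<Phi> i *\<^sub>v z) (\<lambda>z. Bt *\<^sub>v z)
        (the_inv_into (carrier_vec p) (\<lambda>z. \<Phi> 0 *\<^sub>v z) (vec_first zb' p)) + D0mat p k r *\<^sub>v zb')
    = transpose_mat (transpose_mat (beta_block p k r \<Phi> Bt P0i)) *\<^sub>v (zb - zb')"
proof -
  have "k * p = p + p*(k-1)" using k by (cases k) auto
  then have "beta_block p k r \<Phi> Bt P0i *\<^sub>v (zb - zb')
      = beta_block p k r \<Phi> Bt P0i *\<^sub>v zb - beta_block p k r \<Phi> Bt P0i *\<^sub>v zb'"
    using mult_minus_distrib_mat_vec[OF beta_block_carrier_mat[OF Bt P0i, of k \<Phi>]] zb zb' by auto
  then show ?thesis
    unfolding state_map_linear[OF k dims Bt P0i inv1 inv2 zb] state_map_linear[OF k dims Bt P0i inv1 inv2 zb']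
    by simp
qed

lemma mult_mat_vec_uminus:
  fixes M :: "'a::comm_ring_1 mat"
  assumes "M \<in> carrier_mat n m" "x \<in> carrier_vec m"
  shows "M *\<^sub>v (- x) = - (M *\<^sub>v x)"
  by (rule eq_vecI) (use assms in \<open>auto simp: scalar_prod_def sum_negf[symmetric]\<close>)

lemma mult_mat_vec_eq_neg_factor:
  fixes M :: "'a::comm_ring_1 mat"
  assumes M: "M \<in> carrier_mat n n" and A: "A \<in> carrier_mat n r" and Bt: "Bt \<in> carrier_mat r n"
    and AB: "A * Bt = - M" and x: "x \<in> carrier_vec n"
  shows "M *\<^sub>v x = - (A *\<^sub>v (Bt *\<^sub>v x))"
proof -
  have "M = - (A * Bt)" using AB by simp
  then show ?thesis using A Bt x by (simp add: assoc_mult_mat_vec)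
qed

lemma Mr_wit_linear:
  fixes \<Phi> :: "nat \<Rightarrow> real mat"
  assumes k: "k \<ge> 1" and rp: "r \<le> p"
    and dims: "\<forall>i\<le>k. \<Phi> i \<in> carrier_mat p p"
    and LIN1: "invertible_mat (\<Phi> 0)"
    and LIN2a: "\<exists>x\<in>carrier_vec p. c = PhiAt p k \<Phi> 1 *\<^sub>v x"
    and LIN3a: "Polynomial.order 1 (detPhi p k \<Phi>) = p - r"
    and LIN3b: "\<forall>z. poly (detPhi p k \<Phi>) z = 0 \<longrightarrow> z = 1 \<or> 1 < cmod z"
    and \<alpha>: "\<alpha> \<in> carrier_mat p r" and \<beta>: "\<beta> \<in> carrier_mat p r" and rk: "vec_space.rank p \<alpha> = r"
    and AB: "\<alpha> * transpose_mat \<beta> = - PhiAt p k \<Phi> 1"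
  shows "Mr_wit p k r c (\<lambda>i z. \<Phi> i *\<^sub>v z) \<alpha> (\<lambda>z. transpose_mat \<beta> *\<^sub>v z)"
proof -
  define Bt where "Bt = transpose_mat \<beta>"
  have Bt: "Bt \<in> carrier_mat r p" unfolding Bt_def using \<beta> by simp
  have P0: "\<Phi> 0 \<in> carrier_mat p p" using dims by simp
  obtain P0i where P0i: "P0i \<in> carrier_mat p p" "\<Phi> 0 * P0i = 1\<^sub>m p" "P0i * \<Phi> 0 = 1\<^sub>m p"
    using invertible_mat_obtain_inverse[OF P0 LIN1] by blast
  have PA: "PhiAt p k \<Phi> 1 \<in> carrier_mat p p" by (simp add: PhiAt_def)
  note neg_factor = mult_mat_vec_eq_neg_factor[OF PA \<alpha> Bt AB[folded Bt_def]]
  have const: "\<exists>\<mu>\<in>carrier_vec r. c = \<alpha> *\<^sub>v \<mu>"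
  proof -
    from LIN2a obtain x0 where x0: "x0 \<in> carrier_vec p" "c = PhiAt p k \<Phi> 1 *\<^sub>v x0" by blast
    then have "c = \<alpha> *\<^sub>v (- (Bt *\<^sub>v x0))"
      using neg_factor mult_mat_vec_uminus[OF \<alpha> mult_mat_vec_carrier[OF Bt x0(1)]] by simp
    then show ?thesis using Bt x0 by (intro bexI[of _ "- (Bt *\<^sub>v x0)"]) auto
  qed
  have theta: "\<forall>z\<in>carrier_vec p. Bt *\<^sub>v z \<in> carrier_vec r \<and> pifun p k (\<lambda>i z. \<Phi> i *\<^sub>v z) z = \<alpha> *\<^sub>v (Bt *\<^sub>v z)"
    using Bt pifun_linear[OF dims] neg_factor by simp
  define bb where "bb = transpose_mat (beta_block p k r \<Phi> Bt P0i)"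
  have "k * p = p + p*(k-1)" using k by (cases k) auto
  then have bb: "bb \<in> carrier_mat (k*p) (p*(k-1) + r)"
    unfolding bb_def using beta_block_carrier_mat[OF Bt P0i(1)] by (simp add: add.commute)
  have "srad (companion p k r \<Phi> \<alpha> Bt P0i) < 1"
    using srad_companion_less_1[OF k rp dims \<alpha> Bt P0i(1,2) _ LIN3a LIN3b] AB
    unfolding Bt_def PhiAt_eq_Phi_eval by simp
  moreover have "jsr (p*(k-1) + r) ((\<lambda>\<beta>. 1\<^sub>m (p*(k-1) + r) + transpose_mat \<beta> * alpha_bold p k r \<alpha>) ` {bb})
      \<le> ereal (srad (companion p k r \<Phi> \<alpha> Bt P0i))"
    unfolding image_insert image_empty bb_def companion_eq_alpha_bold
    using companion_carrier_mat[OF \<alpha> Bt P0i(1)] by (intro jsr_singleton_le) (auto simp: add.commute)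
  ultimately show ?thesis
    unfolding Mr_wit_def Bt_def[symmetric]
    using \<alpha> rk homeo_vec_mult_mat_vec[OF P0 P0i(1,3,2)] const theta closed_mats_singleton[OF bb]
      state_map_diff_linear[OF k dims Bt P0i(1,3,2), folded bb_def]
    by (intro conjI exI[of _ "mnorm bb"] exI[of _ "srad (companion p k r \<Phi> \<alpha> Bt P0i)"] exI[of _ "{bb}"]) auto
qed

lemma neg_rank_factorization:
  assumes A: "A \<in> carrier_mat n n" and r: "vec_space.rank n A = r"
  shows "\<exists>\<alpha> \<beta>. \<alpha> \<in> carrier_mat n r \<and> \<beta> \<in> carrier_mat n r \<and>
    vec_space.rank n \<alpha> = r \<and> vec_space.rank n \<beta> = r \<and> \<alpha> * transpose_mat \<beta> = - (A :: 'a::field mat)"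
proof -
  obtain \<alpha> \<beta> where ab: "\<alpha> \<in> carrier_mat n r" "\<beta> \<in> carrier_mat n r" "vec_space.rank n \<alpha> = r"
    "vec_space.rank n \<beta> = r" "\<alpha> * transpose_mat \<beta> = A"
    using vec_space.rank_factorization[OF A r] by blast
  have "(- \<alpha>) * transpose_mat \<beta> = - A" using ab by (simp add: uminus_mult_left_mat)
  moreover have "- \<alpha> \<in> carrier_mat n r" using ab(1) by simp
  ultimately show ?thesis using ab(2,4) vec_space.rank_uminus_of_full[OF ab(1,3)] by blast
qed

theorem proposition2p1:
  fixes p k r :: nat and c :: "real vec" and \<Phi> :: "nat \<Rightarrow> real mat"
  assumes p: "p \<ge> 1" and k: "k \<ge> 1" and r: "r \<le> p"
    and dims: "\<forall>i\<le>k. \<Phi> i \<in> carrier_mat p p" and c: "c \<in> carrier_vec p"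
    and LIN1: "invertible_mat (\<Phi> 0)"
    and LIN2a: "\<exists>x\<in>carrier_vec p. c = PhiAt p k \<Phi> 1 *\<^sub>v x"
    and LIN2b: "vec_space.rank p (PhiAt p k \<Phi> 1) = r"
    and LIN3a: "Polynomial.order 1 (detPhi p k \<Phi>) = p - r"
    and LIN3b: "\<forall>z. poly (detPhi p k \<Phi>) z = 0 \<longrightarrow> z = 1 \<or> 1 < cmod z"
  shows "let f = (\<lambda>i z. \<Phi> i *\<^sub>v z) in
    in_Mr p k r c f \<and>
    (\<forall>j\<in>{1..k-1}. \<forall>z\<in>carrier_vec p. gfun p k f j z = Gamma p k \<Phi> j *\<^sub>v z) \<and>
    (\<exists>\<alpha> \<beta>. \<alpha> \<in> carrier_mat p r \<and> \<beta> \<in> carrier_mat p r \<and>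
        vec_space.rank p \<alpha> = r \<and> vec_space.rank p \<beta> = r \<and>
        \<alpha> * transpose_mat \<beta> = - PhiAt p k \<Phi> 1) \<and>
    (\<forall>\<alpha> \<beta>. \<alpha> \<in> carrier_mat p r \<longrightarrow> \<beta> \<in> carrier_mat p r \<longrightarrow>
        vec_space.rank p \<alpha> = r \<longrightarrow> vec_space.rank p \<beta> = r \<longrightarrow>
        \<alpha> * transpose_mat \<beta> = - PhiAt p k \<Phi> 1 \<longrightarrow>
        Mr_wit p k r c f \<alpha> (\<lambda>z. transpose_mat \<beta> *\<^sub>v z) \<and>
        (\<forall>\<alpha>perp. \<alpha>perp \<in> carrier_mat p (p - r) \<longrightarrow> vec_space.rank p \<alpha>perp = p - r \<longrightarrow>
           transpose_mat \<alpha>perp * \<alpha> = 0\<^sub>m (p - r) r \<longrightarrow>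
           (\<forall>z\<in>carrier_vec p. psi p k f \<alpha>perp z =
              (transpose_mat \<alpha>perp *
                 mat p p (\<lambda>(a,b). \<Phi> 0 $$ (a,b) - (\<Sum>i\<in>{1..k-1}. Gamma p k \<Phi> i $$ (a,b)))) *\<^sub>v z)))"
proof -
  have factorization: "\<exists>\<alpha> \<beta>. \<alpha> \<in> carrier_mat p r \<and> \<beta> \<in> carrier_mat p r \<and>
      vec_space.rank p \<alpha> = r \<and> vec_space.rank p \<beta> = r \<and> \<alpha> * transpose_mat \<beta> = - PhiAt p k \<Phi> 1"
    using neg_rank_factorization[OF _ LIN2b] by (simp add: PhiAt_def)
  have witness: "Mr_wit p k r c (\<lambda>i z. \<Phi> i *\<^sub>v z) \<alpha> (\<lambda>z. transpose_mat \<beta> *\<^sub>v z)"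
    if "\<alpha> \<in> carrier_mat p r" "\<beta> \<in> carrier_mat p r" "vec_space.rank p \<alpha> = r"
      "\<alpha> * transpose_mat \<beta> = - PhiAt p k \<Phi> 1" for \<alpha> \<beta>
    by (rule Mr_wit_linear[OF k r dims LIN1 LIN2a LIN3a LIN3b that])
  show ?thesis
    unfolding Let_def in_Mr_def
    using factorization witness gfun_linear[OF dims] psi_linear[OF dims] by (intro conjI) blast+
qed

end
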